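(* Let $S$ be an ergodic automorphism of a standard probability space $(Y,\mathcal C,\nu)$ with discrete spectrum, and suppose $S^{q_n}\to\mathrm{Id}$ (weakly) on $L^2(Y,\nu)$ for some increasing sequence $(q_n)$ of natural numbers. Let $\varphi:Y\to\{0,1\}$ be measurable, $W$ the weighted operator $W\xi(y)=(-1)^{\varphi(y)}\xi(Sy)$ on $L^2(Y,\nu)$, and $\sigma_{\mathbf 1}$ the spectral measure of the constant function $\mathbf 1$ under $W$. If $r\neq s$ are integers and for some $t\in\mathbb Z$ we have $\int_Y(-1)^{\varphi^{(rtq_n)}}d\nu\to c_1$ and $\int_Y(-1)^{\varphi^{(stq_n)}}d\nu\to c_2$ with $c_1\neq c_2$, then $\sigma_{\mathbf 1}^{(r)}\perp\sigma_{\mathbf 1}^{(s)}$.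
   Context: $\varphi^{(m)}(y)=\varphi(y)+\varphi(Sy)+\dots+\varphi(S^{m-1}y)$ for $m>0$, $\varphi^{(0)}=0$, extended to $m\in\mathbb Z$ by the cocycle identity $\varphi^{(m_1+m_2)}=\varphi^{(m_1)}+\varphi^{(m_2)}\circ S^{m_1}$ (values taken mod 2). The spectral measure is the measure on the unit circle with $\hat\sigma_{\mathbf 1}(m)=\langle W^m\mathbf 1,\mathbf 1\rangle=\int_Y(-1)^{\varphi^{(m)}}d\nu$. For a measure $\sigma$ on the circle and $k\in\mathbb Z$, $\sigma^{(k)}$ is its image under $z\mapsto z^k$. *)

theory Defs
  imports "HOL-Probability.Probability"
begin

definition L2fun :: "'a measure \<Rightarrow> ('a \<Rightarrow> complex) \<Rightarrow> bool" where
  "L2fun M f \<longleftrightarrow> f \<in> borel_measurable M \<and> integrable M (\<lambda>y. (cmod (f y))\<^sup>2)"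

definition mp_automorphism :: "'a measure \<Rightarrow> ('a \<Rightarrow> 'a) \<Rightarrow> bool" where
  "mp_automorphism M S \<longleftrightarrow> bij S \<and> S \<in> measurable M M \<and> inv S \<in> measurable M M
     \<and> distr M M S = M \<and> distr M M (inv S) = M"

definition ergodic :: "'a measure \<Rightarrow> ('a \<Rightarrow> 'a) \<Rightarrow> bool" where
  "ergodic M S \<longleftrightarrow> (\<forall>A\<in>sets M. S -` A \<inter> space M = A \<longrightarrow>
      measure M A = 0 \<or> measure M A = 1)"

definition eigenfunction :: "'a measure \<Rightarrow> ('a \<Rightarrow> 'a) \<Rightarrow> ('a \<Rightarrow> complex) \<Rightarrow> bool" where
  "eigenfunction M S f \<longleftrightarrow> L2fun M f \<and> (\<exists>e::complex. AE y in M. f (S y) = e * f y)"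

definition discrete_spectrum :: "'a measure \<Rightarrow> ('a \<Rightarrow> 'a) \<Rightarrow> bool" where
  "discrete_spectrum M S \<longleftrightarrow> (\<forall>g. L2fun M g \<longrightarrow> (\<forall>\<epsilon>>0. \<exists>F c. finite F \<and>
      (\<forall>f\<in>F. eigenfunction M S f) \<and>
      (\<integral>y. (cmod (g y - (\<Sum>f\<in>F. c f * f y)))\<^sup>2 \<partial>M) < \<epsilon>))"

definition weakly_rigid :: "'a measure \<Rightarrow> ('a \<Rightarrow> 'a) \<Rightarrow> (nat \<Rightarrow> nat) \<Rightarrow> bool" where
  "weakly_rigid M S q \<longleftrightarrow> (\<forall>f g. L2fun M f \<longrightarrow> L2fun M g \<longrightarrow>
      ((\<lambda>n. \<integral>y. f ((S ^^ q n) y) * cnj (g y) \<partial>M) \<longlonglongrightarrow> (\<integral>y. f y * cnj (g y) \<partial>M)))"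

text \<open>Cocycle phi^(m) (values mod 2), for integer m, via the cocycle identity.\<close>
definition cocycle :: "('a \<Rightarrow> 'a) \<Rightarrow> ('a \<Rightarrow> nat) \<Rightarrow> int \<Rightarrow> 'a \<Rightarrow> nat" where
  "cocycle S \<phi> m y = (if 0 \<le> m then (\<Sum>k<nat m. \<phi> ((S ^^ k) y)) mod 2
      else (\<Sum>k\<in>{1..nat (- m)}. \<phi> ((inv S ^^ k) y)) mod 2)"

text \<open>sigma is the spectral measure of the constant function 1 under W:
  a finite Borel measure on the unit circle with Fourier coefficients
  hat sigma(m) = integral of (-1)^(phi^(m)).\<close>
definition is_spectral_measure_one ::
  "'a measure \<Rightarrow> ('a \<Rightarrow> 'a) \<Rightarrow> ('a \<Rightarrow> nat) \<Rightarrow> complex measure \<Rightarrow> bool" where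
  "is_spectral_measure_one M S \<phi> \<sigma> \<longleftrightarrow> sets \<sigma> = sets borel \<and> finite_measure \<sigma> \<and>
      emeasure \<sigma> (UNIV - sphere 0 1) = 0 \<and>
      (\<forall>m::int. (\<integral>z. z powi m \<partial>\<sigma>) = complex_of_real (\<integral>y. (-1::real) ^ cocycle S \<phi> m y \<partial>M))"

definition pow_image :: "complex measure \<Rightarrow> int \<Rightarrow> complex measure" where
  "pow_image \<sigma> k = distr \<sigma> borel (\<lambda>z. z powi k)"

definition mutually_singular :: "'b measure \<Rightarrow> 'b measure \<Rightarrow> bool" where
  "mutually_singular \<mu> \<tau> \<longleftrightarrow> (\<exists>A\<in>sets \<mu>. emeasure \<mu> A = 0 \<and> emeasure \<tau> (space \<tau> - A) = 0)"

end

theory Submission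
  imports Defs
begin

lemma finite_measures_common_density:
  fixes \<mu>1 \<mu>2 :: "'a measure"
  assumes fin1: "finite_measure \<mu>1" and fin2: "finite_measure \<mu>2" and sets_eq: "sets \<mu>2 = sets \<mu>1"
  obtains \<rho> and D1 D2 :: "'a \<Rightarrow> real" where "finite_measure \<rho>" "sets \<rho> = sets \<mu>1"
    "D1 \<in> borel_measurable \<rho>" "D2 \<in> borel_measurable \<rho>" "\<And>x. 0 \<le> D1 x" "\<And>x. 0 \<le> D2 x"
    "density \<rho> D1 = \<mu>1" "density \<rho> D2 = \<mu>2"
proof -
  interpret m1: finite_measure \<mu>1 by fact
  interpret m2: finite_measure \<mu>2 by fact
  define \<rho> where "\<rho> = sup_measure' \<mu>1 \<mu>2"
  have sets_\<rho>: "sets \<rho> = sets \<mu>1" and space_\<rho>: "space \<rho> = space \<mu>1"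
    unfolding \<rho>_def using sets_eq by simp_all
  have "emeasure \<rho> (space \<rho>) \<le> emeasure \<mu>1 (space \<mu>1) + emeasure \<mu>2 (space \<mu>2)"
    unfolding \<rho>_def space_\<rho>[unfolded \<rho>_def]
  proof (subst emeasure_sup_measure'[OF sets_eq], simp, intro SUP_least add_mono)
    show "emeasure \<mu>1 (space \<mu>1 \<inter> Y) \<le> emeasure \<mu>1 (space \<mu>1)" for Y
      by (rule emeasure_mono) auto
    show "emeasure \<mu>2 (space \<mu>1 \<inter> - Y) \<le> emeasure \<mu>2 (space \<mu>2)" for Y
    proof -
      have "space \<mu>1 \<inter> - Y \<subseteq> space \<mu>2" using sets_eq_imp_space_eq[OF sets_eq] by auto
      then show ?thesis by (rule emeasure_mono) simp
    qed
  qed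
  also have "\<dots> < \<infinity>"
    by (simp add: less_top[symmetric])
  finally interpret \<rho>: finite_measure \<rho>
    by (intro finite_measureI) simp
  have ac: "absolutely_continuous \<rho> \<mu>" if "\<mu> = \<mu>1 \<or> \<mu> = \<mu>2" for \<mu>
    unfolding absolutely_continuous_def
  proof
    fix X assume "X \<in> null_sets \<rho>"
    then have "X \<in> sets \<mu>1" "emeasure \<rho> X = 0" using sets_\<rho> by auto
    then have "emeasure \<mu>1 X = 0" "emeasure \<mu>2 X = 0"
      using le_emeasure_sup_measure'1[OF sets_eq] le_emeasure_sup_measure'2[OF sets_eq]
      by (metis \<rho>_def le_zero_eq)+
    then show "X \<in> null_sets \<mu>" using that sets_eq \<open>X \<in> sets \<mu>1\<close> by auto
  qed
  have density: "\<exists>D. D \<in> borel_measurable \<rho> \<and> (\<forall>x. (0::real) \<le> D x) \<and> density \<rho> D = \<mu>"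
    if \<mu>: "\<mu> = \<mu>1 \<or> \<mu> = \<mu>2" for \<mu>
  proof -
    have fin: "finite_measure \<mu>" using \<mu> fin1 fin2 by blast
    have sets_\<mu>: "sets \<mu> = sets \<rho>" using \<mu> sets_eq sets_\<rho> by auto
    obtain D where D: "D \<in> borel_measurable \<rho>" "AE x in \<rho>. RN_deriv \<rho> \<mu> x = ennreal (D x)"
      "\<And>x. 0 \<le> D x"
      using \<rho>.real_RN_deriv[OF fin ac[OF \<mu>] sets_\<mu>] by blast
    have "density \<rho> (\<lambda>x. ennreal (D x)) = density \<rho> (RN_deriv \<rho> \<mu>)"
      by (rule density_cong) (use D in auto)
    also have "\<dots> = \<mu>" by (rule \<rho>.density_RN_deriv[OF ac[OF \<mu>] sets_\<mu>])
    finally show ?thesis using D by blast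
  qed
  obtain D1 D2 :: "'a \<Rightarrow> real" where "D1 \<in> borel_measurable \<rho>" "\<forall>x. 0 \<le> D1 x" "density \<rho> D1 = \<mu>1"
    "D2 \<in> borel_measurable \<rho>" "\<forall>x. 0 \<le> D2 x" "density \<rho> D2 = \<mu>2"
    using density[of \<mu>1] density[of \<mu>2] by auto
  then show ?thesis using that \<rho>.finite_measure_axioms sets_\<rho> by blast
qed

lemma mutually_singular_if_densities_disjoint:
  fixes D1 D2 :: "'a \<Rightarrow> real"
  assumes [measurable]: "D1 \<in> borel_measurable \<rho>" "D2 \<in> borel_measurable \<rho>"
    and disjoint: "AE x in \<rho>. D1 x = 0 \<or> D2 x = 0"
  shows "mutually_singular (density \<rho> D1) (density \<rho> D2)"
proof -
  define A where "A = {x \<in> space \<rho>. D1 x = 0}"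
  have A: "A \<in> sets \<rho>" unfolding A_def by measurable
  have "emeasure (density \<rho> D1) A = (\<integral>\<^sup>+x\<in>A. D1 x \<partial>\<rho>)"
    by (rule emeasure_density) (use A in auto)
  also have "\<dots> = 0" by (rule nn_integral_zero') (auto simp: A_def indicator_def)
  finally have "emeasure (density \<rho> D1) A = 0" .
  moreover have "emeasure (density \<rho> D2) (space (density \<rho> D2) - A) = (\<integral>\<^sup>+x\<in>space \<rho> - A. D2 x \<partial>\<rho>)"
    by (simp add: emeasure_density A sets.compl_sets)
  moreover have "\<dots> = 0"
    by (rule nn_integral_zero', use disjoint in eventually_elim) (auto simp: A_def indicator_def)
  ultimately show ?thesis
    unfolding mutually_singular_def using A by auto
qed

text \<open>With densities \<open>D1\<close>, \<open>D2\<close> with respect to a common \<open>\<rho>\<close>, the weights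
  \<open>H1 = D2 / (1 + D1 + D2)\<close> on \<open>\<mu>1\<close> and \<open>H2 = D1 / (1 + D1 + D2)\<close> on \<open>\<mu>2\<close> both turn into
  \<open>K = D1 D2 / (1 + D1 + D2)\<close> on \<open>\<rho>\<close>, so the two limits force \<open>c \<integral>K = c' \<integral>K\<close>, i.e.
  \<open>K = 0\<close> almost everywhere.\<close>

lemma mutually_singular_if_weighted_limits_differ:
  fixes \<mu>1 \<mu>2 :: "'a measure" and h :: "nat \<Rightarrow> 'a \<Rightarrow> complex" and c c' :: complex
  assumes fin1: "finite_measure \<mu>1" and fin2: "finite_measure \<mu>2" and sets_eq: "sets \<mu>2 = sets \<mu>1"
    and h: "\<And>n. h n \<in> borel_measurable \<mu>1"
    and lim1: "\<And>H. H \<in> borel_measurable \<mu>1 \<Longrightarrow> (\<And>x. 0 \<le> H x \<and> H x \<le> 1) \<Longrightarrow>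
       (\<lambda>n. \<integral>x. complex_of_real (H x) * h n x \<partial>\<mu>1) \<longlonglongrightarrow> c * complex_of_real (\<integral>x. H x \<partial>\<mu>1)"
    and lim2: "\<And>H. H \<in> borel_measurable \<mu>2 \<Longrightarrow> (\<And>x. 0 \<le> H x \<and> H x \<le> 1) \<Longrightarrow>
       (\<lambda>n. \<integral>x. complex_of_real (H x) * h n x \<partial>\<mu>2) \<longlonglongrightarrow> c' * complex_of_real (\<integral>x. H x \<partial>\<mu>2)"
    and "c \<noteq> c'"
  shows "mutually_singular \<mu>1 \<mu>2"
proof -
  obtain \<rho> and D1 D2 :: "'a \<Rightarrow> real" where "finite_measure \<rho>" and sets_\<rho>: "sets \<rho> = sets \<mu>1"
    and D1[measurable]: "D1 \<in> borel_measurable \<rho>" and D2[measurable]: "D2 \<in> borel_measurable \<rho>"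
    and D1_nonneg: "\<And>x. 0 \<le> D1 x" and D2_nonneg: "\<And>x. 0 \<le> D2 x"
    and dens1: "density \<rho> D1 = \<mu>1" and dens2: "density \<rho> D2 = \<mu>2"
    using finite_measures_common_density[OF fin1 fin2 sets_eq] by blast
  interpret finite_measure \<rho> by fact
  have sets_\<mu>1: "sets \<mu>1 = sets \<rho>" and sets_\<mu>2: "sets \<mu>2 = sets \<rho>"
    using sets_\<rho> sets_eq by simp_all
  note meas_\<mu>1 = measurable_cong_sets[OF sets_\<mu>1 refl] and meas_\<mu>2 = measurable_cong_sets[OF sets_\<mu>2 refl]
  note h[unfolded meas_\<mu>1, measurable]
  define K where "K x = D1 x * D2 x / (1 + D1 x + D2 x)" for x
  define H1 where "H1 x = D2 x / (1 + D1 x + D2 x)" for x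
  define H2 where "H2 x = D1 x / (1 + D1 x + D2 x)" for x
  have H1_bounds: "0 \<le> H1 x \<and> H1 x \<le> 1" and H2_bounds: "0 \<le> H2 x \<and> H2 x \<le> 1" for x
    unfolding H1_def H2_def using D1_nonneg[of x] D2_nonneg[of x] by auto
  have K_nonneg: "0 \<le> K x" for x unfolding K_def using D1_nonneg[of x] D2_nonneg[of x] by simp
  have transfer: "(\<integral>x. complex_of_real (H x) * g x \<partial>\<mu>) = (\<integral>x. complex_of_real (K x) * g x \<partial>\<rho>)"
    if "density \<rho> D = \<mu>" "D \<in> borel_measurable \<rho>" "\<And>x. 0 \<le> D x" "\<And>x. D x * H x = K x"
      "H \<in> borel_measurable \<rho>" "g \<in> borel_measurable \<rho>" for \<mu> D H and g :: "'a \<Rightarrow> complex"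
  proof -
    have "(\<integral>x. complex_of_real (H x) * g x \<partial>\<mu>) = (\<integral>x. D x *\<^sub>R (complex_of_real (H x) * g x) \<partial>\<rho>)"
      unfolding that(1)[symmetric] by (rule integral_density) (use that in auto)
    then show ?thesis by (simp add: scaleR_conv_of_real that(4)[symmetric] mult.assoc)
  qed
  have transfer1: "(\<integral>x. complex_of_real (H1 x) * g x \<partial>\<mu>1) = (\<integral>x. complex_of_real (K x) * g x \<partial>\<rho>)"
    if "g \<in> borel_measurable \<rho>" for g
    by (rule transfer) (use that dens1 D1 D1_nonneg in \<open>auto simp: K_def H1_def\<close>)
  have transfer2: "(\<integral>x. complex_of_real (H2 x) * g x \<partial>\<mu>2) = (\<integral>x. complex_of_real (K x) * g x \<partial>\<rho>)"
    if "g \<in> borel_measurable \<rho>" for g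
    by (rule transfer) (use that dens2 D2 D2_nonneg in \<open>auto simp: K_def H2_def\<close>)
  have H1[measurable]: "H1 \<in> borel_measurable \<rho>" and H2[measurable]: "H2 \<in> borel_measurable \<rho>"
    unfolding H1_def H2_def by measurable
  have mass1: "(\<integral>x. H1 x \<partial>\<mu>1) = (\<integral>x. K x \<partial>\<rho>)" and mass2: "(\<integral>x. H2 x \<partial>\<mu>2) = (\<integral>x. K x \<partial>\<rho>)"
    using transfer1[of "\<lambda>_. 1"] transfer2[of "\<lambda>_. 1"] by simp_all
  have "c * complex_of_real (\<integral>x. K x \<partial>\<rho>) = c' * complex_of_real (\<integral>x. K x \<partial>\<rho>)"
  proof (rule LIMSEQ_unique)
    show "(\<lambda>n. \<integral>x. complex_of_real (K x) * h n x \<partial>\<rho>) \<longlonglongrightarrow> c * complex_of_real (\<integral>x. K x \<partial>\<rho>)"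
      using lim1[of H1] H1_bounds by (simp add: meas_\<mu>1 transfer1 mass1)
    show "(\<lambda>n. \<integral>x. complex_of_real (K x) * h n x \<partial>\<rho>) \<longlonglongrightarrow> c' * complex_of_real (\<integral>x. K x \<partial>\<rho>)"
      using lim2[of H2] H2_bounds by (simp add: meas_\<mu>2 transfer2 mass2)
  qed
  with \<open>c \<noteq> c'\<close> have "(\<integral>x. K x \<partial>\<rho>) = 0" by simp
  moreover have "integrable \<rho> K"
  proof -
    have "integrable \<mu>1 H1"
      by (rule finite_measure.integrable_const_bound[OF fin1, of _ 1]) (use H1_bounds in \<open>auto simp: meas_\<mu>1\<close>)
    then have "integrable \<rho> (\<lambda>x. D1 x *\<^sub>R H1 x)"
      unfolding dens1[symmetric] by (subst (asm) integrable_density) (auto simp: D1_nonneg)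
    then show ?thesis by (simp add: K_def[abs_def] H1_def)
  qed
  ultimately have "AE x in \<rho>. K x = 0"
    using integral_nonneg_eq_0_iff_AE K_nonneg by blast
  then have "AE x in \<rho>. D1 x = 0 \<or> D2 x = 0"
    by eventually_elim (use D1_nonneg D2_nonneg in \<open>auto simp: K_def add_nonneg_eq_0_iff\<close>)
  from mutually_singular_if_densities_disjoint[OF D1 D2 this] show ?thesis
    unfolding dens1 dens2 .
qed

lemma LIMSEQ_of_uniform_approximations:
  fixes a :: "nat \<Rightarrow> nat \<Rightarrow> 'a::real_normed_vector"
  assumes lim: "\<And>j. (\<lambda>n. a j n) \<longlonglongrightarrow> b j"
    and approx_seq: "\<And>j n. norm (a j n - a' n) \<le> \<delta> j" and approx_lim: "\<And>j. norm (b j - b') \<le> \<delta> j"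
    and "\<delta> \<longlonglongrightarrow> 0"
  shows "a' \<longlonglongrightarrow> b'"
proof (rule LIMSEQ_I)
  fix e :: real assume "0 < e"
  then obtain j where "\<forall>i\<ge>j. norm (\<delta> i - 0) < e/3"
    using LIMSEQ_D[OF \<open>\<delta> \<longlonglongrightarrow> 0\<close>, of "e/3"] by auto
  then have \<delta>: "\<delta> j < e/3" by auto
  obtain N where N: "\<forall>n\<ge>N. norm (a j n - b j) < e/3"
    using LIMSEQ_D[OF lim[of j], of "e/3"] \<open>0 < e\<close> by auto
  have "norm (a' n - b') < e" if "n \<ge> N" for n
  proof -
    have "a' n - b' = (a' n - a j n) + (a j n - b j) + (b j - b')" by simp
    then have "norm (a' n - b') \<le> norm (a' n - a j n) + norm (a j n - b j) + norm (b j - b')"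
      by (metis norm_triangle_ineq order_trans add_right_mono)
    moreover have "norm (a j n - b j) < e/3" using N that by auto
    ultimately show ?thesis
      using approx_seq[of j n] approx_lim[of j] \<delta> by (simp add: norm_minus_commute)
  qed
  then show "\<exists>N. \<forall>n\<ge>N. norm (a' n - b') < e" by blast
qed

lemma borel_measurable_powi [measurable]: "(\<lambda>z::complex. z powi k) \<in> borel_measurable borel"
  by (cases "k \<ge> 0") (simp_all add: power_int_def)

lemma norm_powi_sphere: "z \<in> sphere 0 1 \<Longrightarrow> cmod (z powi k) = 1"
  by (simp add: norm_power_int)

lemma inverse_eq_cnj_sphere: "z \<in> sphere 0 1 \<Longrightarrow> inverse z = cnj z"
  using complex_norm_square[of z] by (intro inverse_unique) simp

definition bounded_on_circle :: "(complex \<Rightarrow> complex) \<Rightarrow> bool" where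
  "bounded_on_circle G \<longleftrightarrow> G \<in> borel_measurable borel \<and> (\<exists>B. \<forall>z\<in>sphere 0 1. cmod (G z) \<le> B)"

lemma bounded_on_circleI:
  "G \<in> borel_measurable borel \<Longrightarrow> (\<And>z. z \<in> sphere 0 1 \<Longrightarrow> cmod (G z) \<le> B) \<Longrightarrow> bounded_on_circle G"
  unfolding bounded_on_circle_def by blast

lemma bounded_on_circle_const: "bounded_on_circle (\<lambda>z. a)"
  by (auto simp: bounded_on_circle_def)

lemma bounded_on_circle_powi: "bounded_on_circle (\<lambda>z. z powi k)"
  by (auto simp: bounded_on_circle_def norm_powi_sphere)

lemma bounded_on_circle_indicator: "A \<in> sets borel \<Longrightarrow> bounded_on_circle (indicator A)"
  by (rule bounded_on_circleI[of _ 1]) (auto simp: indicator_def)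

lemma bounded_on_circle_add:
  assumes "bounded_on_circle G" "bounded_on_circle H"
  shows "bounded_on_circle (\<lambda>z. G z + H z)"
proof -
  from assms obtain B1 B2 where "\<forall>z\<in>sphere 0 1. cmod (G z) \<le> B1" "\<forall>z\<in>sphere 0 1. cmod (H z) \<le> B2"
    and "G \<in> borel_measurable borel" "H \<in> borel_measurable borel"
    by (auto simp: bounded_on_circle_def)
  then show ?thesis
    by (intro bounded_on_circleI[of _ "B1 + B2"]) (auto intro!: order_trans[OF norm_triangle_ineq] add_mono)
qed

lemma bounded_on_circle_mult:
  assumes "bounded_on_circle G" "bounded_on_circle H"
  shows "bounded_on_circle (\<lambda>z. G z * H z)"
proof -
  from assms obtain B1 B2 where "\<forall>z\<in>sphere 0 1. cmod (G z) \<le> B1" "\<forall>z\<in>sphere 0 1. cmod (H z) \<le> B2"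
    and "G \<in> borel_measurable borel" "H \<in> borel_measurable borel"
    by (auto simp: bounded_on_circle_def)
  then show ?thesis
    by (intro bounded_on_circleI[of _ "B1 * B2"])
       (auto simp: norm_mult intro!: mult_mono order_trans[OF norm_ge_zero])
qed

lemma bounded_on_circle_sum:
  "finite I \<Longrightarrow> (\<And>i. i \<in> I \<Longrightarrow> bounded_on_circle (G i)) \<Longrightarrow> bounded_on_circle (\<lambda>z. \<Sum>i\<in>I. G i z)"
  by (induction I rule: finite_induct) (simp_all add: bounded_on_circle_const bounded_on_circle_add)

inductive trig_poly :: "(complex \<Rightarrow> complex) \<Rightarrow> bool" where
  trig_poly_monomial: "trig_poly (\<lambda>z. a * z powi k)"
| trig_poly_add: "trig_poly P \<Longrightarrow> trig_poly Q \<Longrightarrow> trig_poly (\<lambda>z. P z + Q z)"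
| trig_poly_cong: "trig_poly P \<Longrightarrow> (\<And>z. z \<in> sphere 0 1 \<Longrightarrow> Q z = P z) \<Longrightarrow> Q \<in> borel_measurable borel
    \<Longrightarrow> trig_poly Q"

lemma trig_poly_bounded_on_circle: "trig_poly P \<Longrightarrow> bounded_on_circle P"
proof (induction rule: trig_poly.induct)
  case (trig_poly_monomial a k)
  show ?case by (intro bounded_on_circle_mult bounded_on_circle_const bounded_on_circle_powi)
next
  case (trig_poly_add P Q)
  then show ?case by (intro bounded_on_circle_add)
next
  case (trig_poly_cong P Q)
  then obtain B where "\<forall>z\<in>sphere 0 1. cmod (P z) \<le> B" by (auto simp: bounded_on_circle_def)
  with trig_poly_cong show ?case by (intro bounded_on_circleI[of _ B]) auto
qed

lemma trig_poly_measurable: "trig_poly P \<Longrightarrow> P \<in> borel_measurable borel"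
  using trig_poly_bounded_on_circle bounded_on_circle_def by blast

lemma trig_poly_const: "trig_poly (\<lambda>z. a)"
  using trig_poly_monomial[of a 0] by simp

lemma trig_poly_mult_monomial: "trig_poly Q \<Longrightarrow> trig_poly (\<lambda>z. (a * z powi k) * Q z)"
proof (induction rule: trig_poly.induct)
  case (trig_poly_monomial b l)
  show ?case
  proof (rule trig_poly_cong[OF trig_poly.trig_poly_monomial[of "a * b" "k + l"]])
    fix z :: complex assume "z \<in> sphere 0 1"
    then have "z \<noteq> 0" by auto
    then show "a * z powi k * (b * z powi l) = a * b * z powi (k + l)"
      by (simp add: power_int_add)
  qed simp
next
  case (trig_poly_add P Q)
  from trig_poly.trig_poly_add[OF trig_poly_add.IH] show ?case by (simp add: distrib_left)
next
  case (trig_poly_cong P Q)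
  show ?case
    by (rule trig_poly.trig_poly_cong[OF trig_poly_cong.IH]) (use trig_poly_cong.hyps in auto)
qed

lemma trig_poly_mult: "trig_poly P \<Longrightarrow> trig_poly Q \<Longrightarrow> trig_poly (\<lambda>z. P z * Q z)"
proof (induction rule: trig_poly.induct)
  case (trig_poly_monomial a k)
  then show ?case by (rule trig_poly_mult_monomial)
next
  case (trig_poly_add P1 P2)
  from trig_poly.trig_poly_add[OF trig_poly_add.IH[OF trig_poly_add.prems]] show ?case
    by (simp add: distrib_right)
next
  case (trig_poly_cong P1 P2)
  show ?case
    by (rule trig_poly.trig_poly_cong[OF trig_poly_cong.IH[OF trig_poly_cong.prems]])
       (use trig_poly_cong.hyps trig_poly_measurable[OF trig_poly_cong.prems] in auto)
qed

lemma trig_poly_Re: "trig_poly (\<lambda>z. complex_of_real (Re z))"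
proof (rule trig_poly_cong[OF trig_poly_add[OF trig_poly_monomial[of "1/2" 1] trig_poly_monomial[of "1/2" "-1"]]])
  fix z :: complex assume "z \<in> sphere 0 1"
  then show "complex_of_real (Re z) = 1 / 2 * z powi 1 + 1 / 2 * z powi - 1"
    using complex_add_cnj[of z] inverse_eq_cnj_sphere[of z] by (simp add: power_int_minus field_simps)
qed simp

lemma trig_poly_Im: "trig_poly (\<lambda>z. complex_of_real (Im z))"
proof (rule trig_poly_cong[OF trig_poly_add[OF trig_poly_monomial[of "-\<i>/2" 1] trig_poly_monomial[of "\<i>/2" "-1"]]])
  fix z :: complex assume "z \<in> sphere 0 1"
  have "complex_of_real (Im z) = - \<i> / 2 * (z - cnj z)"
    by (simp add: complex_eq_iff)
  then show "complex_of_real (Im z) = - \<i> / 2 * z powi 1 + \<i> / 2 * z powi - 1"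
    using inverse_eq_cnj_sphere[OF \<open>z \<in> sphere 0 1\<close>] by (simp add: power_int_minus field_simps)
qed simp

lemma trig_poly_real_polynomial_function:
  "real_polynomial_function p \<Longrightarrow> trig_poly (\<lambda>z. complex_of_real (p z))"
proof (induction rule: real_polynomial_function.induct)
  case (linear f)
  then have "linear f" by (rule bounded_linear.linear)
  define a1 a2 where "a1 = f 1" and "a2 = f \<i>"
  have "f z = Re z * a1 + Im z * a2" for z
  proof -
    have "z = Re z *\<^sub>R 1 + Im z *\<^sub>R \<i>" by (simp add: complex_eq_iff)
    then have "f z = f (Re z *\<^sub>R 1 + Im z *\<^sub>R \<i>)" by (rule arg_cong)
    then show ?thesis
      by (simp only: linear_add[OF \<open>linear f\<close>] linear_scale[OF \<open>linear f\<close>] real_scaleR_def a1_def a2_def)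
  qed
  moreover have "trig_poly (\<lambda>z. complex_of_real (Re z) * a1 + complex_of_real (Im z) * a2)"
    by (rule trig_poly_add[OF trig_poly_mult[OF trig_poly_Re trig_poly_const]
          trig_poly_mult[OF trig_poly_Im trig_poly_const]])
  ultimately show ?case by simp
next
  case (add f g)
  from trig_poly_add[OF add.IH] show ?case by simp
next
  case (mult f g)
  from trig_poly_mult[OF mult.IH] show ?case by simp
qed (rule trig_poly_const)

lemma trig_poly_polynomial_function: "polynomial_function g \<Longrightarrow> trig_poly g"
proof -
  assume "polynomial_function g"
  then have "real_polynomial_function (Re \<circ> g)" "real_polynomial_function (Im \<circ> g)"
    unfolding polynomial_function_def using bounded_linear_Re bounded_linear_Im by auto
  then have "trig_poly (\<lambda>z. complex_of_real (Re (g z)) + \<i> * complex_of_real (Im (g z)))"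
    by (auto intro!: trig_poly_add[OF _ trig_poly_mult[OF trig_poly_const]]
        dest!: trig_poly_real_polynomial_function simp: o_def)
  then show ?thesis by (simp add: complex_eq[symmetric])
qed

lemma floor_mult_div_bounds:
  fixes x :: real and N :: nat
  assumes "0 < N"
  shows "x - 1 / N \<le> real_of_int \<lfloor>N * x\<rfloor> / N" and "real_of_int \<lfloor>N * x\<rfloor> / N \<le> x"
proof -
  have "(N * x - 1) / N \<le> real_of_int \<lfloor>N * x\<rfloor> / N" "real_of_int \<lfloor>N * x\<rfloor> / N \<le> N * x / N"
    by (intro divide_right_mono; linarith)+
  then show "x - 1 / N \<le> real_of_int \<lfloor>N * x\<rfloor> / N" "real_of_int \<lfloor>N * x\<rfloor> / N \<le> x"
    using assms by (simp_all add: diff_divide_distrib)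
qed

locale circle_measure = finite_measure \<sigma> for \<sigma> :: "complex measure" +
  assumes sets_eq_borel: "sets \<sigma> = sets borel"
    and null_off_circle: "emeasure \<sigma> (UNIV - sphere 0 1) = 0"
begin

lemma measurable_eq_borel: "measurable \<sigma> N = measurable borel N"
  using measurable_cong_sets[OF sets_eq_borel refl] .

lemma AE_on_circle: "AE z in \<sigma>. z \<in> sphere 0 1"
  by (rule AE_I'[of "UNIV - sphere 0 1"]) (use null_off_circle sets_eq_borel in auto)

lemma integrable_bounded_on_circle:
  assumes "bounded_on_circle G"
  shows "integrable \<sigma> G"
proof -
  obtain B where "\<forall>z\<in>sphere 0 1. cmod (G z) \<le> B" and "G \<in> borel_measurable borel"
    using assms bounded_on_circle_def by auto
  then show ?thesis
    by (intro integrable_const_bound[of _ B]) (use AE_on_circle in \<open>auto simp: measurable_eq_borel\<close>)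
qed

lemma norm_integral_powi_diff_le:
  assumes "bounded_on_circle G" "bounded_on_circle H"
  shows "cmod ((\<integral>z. G z * z powi k \<partial>\<sigma>) - (\<integral>z. H z * z powi k \<partial>\<sigma>)) \<le> (\<integral>z. cmod (G z - H z) \<partial>\<sigma>)"
proof -
  have "(\<integral>z. G z * z powi k \<partial>\<sigma>) - (\<integral>z. H z * z powi k \<partial>\<sigma>) = (\<integral>z. (G z - H z) * z powi k \<partial>\<sigma>)"
    using assms by (simp add: left_diff_distrib integrable_bounded_on_circle bounded_on_circle_mult
        bounded_on_circle_powi)
  also have "cmod \<dots> \<le> (\<integral>z. cmod ((G z - H z) * z powi k) \<partial>\<sigma>)"
    by (rule integral_norm_bound)
  also have "\<dots> = (\<integral>z. cmod (G z - H z) \<partial>\<sigma>)"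
    using assms AE_on_circle
    by (intro integral_cong_AE) (auto simp: measurable_eq_borel bounded_on_circle_def norm_mult
        norm_powi_sphere elim: AE_mp)
  finally show ?thesis .
qed

definition coeff_limit :: "(nat \<Rightarrow> int) \<Rightarrow> complex \<Rightarrow> (complex \<Rightarrow> complex) \<Rightarrow> bool" where
  "coeff_limit m c G \<longleftrightarrow> (\<lambda>n. \<integral>z. G z * z powi m n \<partial>\<sigma>) \<longlonglongrightarrow> c * (\<integral>z. G z \<partial>\<sigma>)"

lemma coeff_limit_add:
  "bounded_on_circle G \<Longrightarrow> bounded_on_circle H \<Longrightarrow> coeff_limit m c G \<Longrightarrow> coeff_limit m c H
    \<Longrightarrow> coeff_limit m c (\<lambda>z. G z + H z)"
  unfolding coeff_limit_def
  by (simp add: distrib_right distrib_left integrable_bounded_on_circle bounded_on_circle_mult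
      bounded_on_circle_powi tendsto_add)

lemma coeff_limit_cmult: "coeff_limit m c G \<Longrightarrow> coeff_limit m c (\<lambda>z. a * G z)"
  unfolding coeff_limit_def by (simp add: mult.assoc mult.left_commute[of c a] tendsto_mult_left)

lemma coeff_limit_sum:
  "finite I \<Longrightarrow> (\<And>i. i \<in> I \<Longrightarrow> bounded_on_circle (G i) \<and> coeff_limit m c (G i))
    \<Longrightarrow> coeff_limit m c (\<lambda>z. \<Sum>i\<in>I. G i z)"
proof (induction I rule: finite_induct)
  case (insert i I)
  then show ?case
    by (simp add: coeff_limit_add bounded_on_circle_sum)
qed (simp add: coeff_limit_def)

lemma coeff_limit_cong:
  assumes "G \<in> borel_measurable borel" "H \<in> borel_measurable borel"
    and "\<And>z. z \<in> sphere 0 1 \<Longrightarrow> G z = H z" and "coeff_limit m c G"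
  shows "coeff_limit m c H"
proof -
  have "AE z in \<sigma>. G z = H z" using AE_on_circle by eventually_elim (use assms in auto)
  then have "(\<integral>z. G z * f z \<partial>\<sigma>) = (\<integral>z. H z * f z \<partial>\<sigma>)" if "f \<in> borel_measurable borel" for f
    by (intro integral_cong_AE) (use assms that in \<open>auto simp: measurable_eq_borel\<close>)
  from this[of "\<lambda>_. 1"] this[of "\<lambda>z. z powi _"] show ?thesis
    using \<open>coeff_limit m c G\<close> by (simp add: coeff_limit_def)
qed

lemma coeff_limit_dominated_convergence:
  assumes "G \<in> borel_measurable borel"
    and "\<And>j. bounded_on_circle (Gs j)" and "\<And>j. coeff_limit m c (Gs j)"
    and bound: "\<And>j z. z \<in> sphere 0 1 \<Longrightarrow> cmod (Gs j z) \<le> B"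
    and lim: "\<And>z. z \<in> sphere 0 1 \<Longrightarrow> (\<lambda>j. Gs j z) \<longlonglongrightarrow> G z"
  shows "coeff_limit m c G"
proof -
  have G_bound: "cmod (G z) \<le> B" if "z \<in> sphere 0 1" for z
    using lim[OF that] bound[OF that] by (intro tendsto_le[OF _ tendsto_const tendsto_norm]) auto
  have G: "bounded_on_circle G" using assms(1) G_bound by (rule bounded_on_circleI)
  have Gs_meas: "Gs j \<in> borel_measurable borel" for j
    using assms(2) bounded_on_circle_def by auto
  define \<delta> where "\<delta> j = (\<integral>z. cmod (Gs j z - G z) \<partial>\<sigma>)" for j
  have \<delta>_nonneg: "0 \<le> \<delta> j" for j unfolding \<delta>_def by simp
  have "\<delta> \<longlonglongrightarrow> (\<integral>z. 0 \<partial>\<sigma>)"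
    unfolding \<delta>_def
  proof (rule integral_dominated_convergence[where w="\<lambda>z. 2 * B"])
    show "AE z in \<sigma>. (\<lambda>j. cmod (Gs j z - G z)) \<longlonglongrightarrow> 0"
      using AE_on_circle by eventually_elim (use lim in \<open>simp add: tendsto_norm_zero_iff LIM_zero\<close>)
    show "AE z in \<sigma>. norm (cmod (Gs j z - G z)) \<le> 2 * B" for j
      using AE_on_circle
    proof eventually_elim
      case (elim z)
      then show ?case
        using norm_triangle_ineq4[of "Gs j z" "G z"] bound[OF elim, of j] G_bound[OF elim] by simp
    qed
  qed (use Gs_meas assms(1) in \<open>simp_all add: measurable_eq_borel\<close>)
  then have \<delta>_lim: "(\<lambda>j. (1 + cmod c) * \<delta> j) \<longlonglongrightarrow> 0"
    using tendsto_mult_left[of \<delta> 0 sequentially "1 + cmod c"] by simp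
  show ?thesis unfolding coeff_limit_def
  proof (rule LIMSEQ_of_uniform_approximations[OF _ _ _ \<delta>_lim])
    show "(\<lambda>n. \<integral>z. Gs j z * z powi m n \<partial>\<sigma>) \<longlonglongrightarrow> c * (\<integral>z. Gs j z \<partial>\<sigma>)" for j
      using assms(3) unfolding coeff_limit_def .
    show "cmod ((\<integral>z. Gs j z * z powi m n \<partial>\<sigma>) - (\<integral>z. G z * z powi m n \<partial>\<sigma>)) \<le> (1 + cmod c) * \<delta> j"
      for j n
      using norm_integral_powi_diff_le[OF assms(2)[of j] G] \<delta>_nonneg[of j]
      by (simp add: \<delta>_def distrib_right add_increasing2)
    show "cmod (c * (\<integral>z. Gs j z \<partial>\<sigma>) - c * (\<integral>z. G z \<partial>\<sigma>)) \<le> (1 + cmod c) * \<delta> j" for j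
    proof -
      have "cmod (c * (\<integral>z. Gs j z \<partial>\<sigma>) - c * (\<integral>z. G z \<partial>\<sigma>)) \<le> cmod c * \<delta> j"
        using norm_integral_powi_diff_le[OF assms(2)[of j] G, of 0]
        by (simp add: \<delta>_def norm_mult mult_left_mono flip: right_diff_distrib)
      then show ?thesis using \<delta>_nonneg[of j] by (simp add: distrib_right)
    qed
  qed
qed

context
  fixes m :: "nat \<Rightarrow> int" and c :: complex
  assumes coeff_limit_monomials: "\<And>k. coeff_limit m c (\<lambda>z. z powi k)"
begin

lemma coeff_limit_trig_poly: "trig_poly P \<Longrightarrow> coeff_limit m c P"
proof (induction rule: trig_poly.induct)
  case (trig_poly_monomial a k)
  then show ?case by (rule coeff_limit_cmult[OF coeff_limit_monomials])
next
  case (trig_poly_add P Q)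
  then show ?case by (intro coeff_limit_add trig_poly_bounded_on_circle)
next
  case (trig_poly_cong P Q)
  show ?case
    by (rule coeff_limit_cong[OF trig_poly_measurable[OF trig_poly_cong.hyps(1)] trig_poly_cong.hyps(3)])
      (use trig_poly_cong in auto)
qed

lemma coeff_limit_const: "coeff_limit m c (\<lambda>z. a)"
  by (rule coeff_limit_trig_poly[OF trig_poly_const])

lemma coeff_limit_continuous:
  assumes G: "continuous_on UNIV G"
  shows "coeff_limit m c G"
proof -
  have "\<forall>j. \<exists>g. polynomial_function g \<and> (\<forall>z\<in>sphere 0 1. cmod (G z - g z) < inverse (real (Suc j)))"
    using Stone_Weierstrass_polynomial_function[OF compact_sphere continuous_on_subset[OF G]] by auto
  then obtain gs where gs: "\<And>j. polynomial_function (gs j)"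
    and approx: "\<And>j z. z \<in> sphere 0 1 \<Longrightarrow> cmod (G z - gs j z) < inverse (real (Suc j))"
    by metis
  have "compact (G ` sphere 0 1)"
    by (rule compact_continuous_image[OF continuous_on_subset[OF G] compact_sphere]) simp
  then have "bounded (G ` sphere 0 1)" by (rule compact_imp_bounded)
  then obtain B where "\<forall>y\<in>G ` sphere 0 1. cmod y \<le> B" unfolding bounded_iff by blast
  then have B: "\<And>z. z \<in> sphere 0 1 \<Longrightarrow> cmod (G z) \<le> B" by blast
  show ?thesis
  proof (rule coeff_limit_dominated_convergence[where Gs=gs and B="B + 1"])
    show "G \<in> borel_measurable borel" using G by (rule borel_measurable_continuous_onI)
    show "bounded_on_circle (gs j)" "coeff_limit m c (gs j)" for j
      using trig_poly_polynomial_function[OF gs]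
      by (simp_all add: trig_poly_bounded_on_circle coeff_limit_trig_poly)
    show "cmod (gs j z) \<le> B + 1" if "z \<in> sphere 0 1" for j z
    proof -
      have "cmod (gs j z) \<le> cmod (G z) + cmod (G z - gs j z)"
        using norm_triangle_ineq4[of "G z" "G z - gs j z"] by simp
      moreover have "inverse (real (Suc j)) \<le> 1" by (simp add: inverse_le_1_iff)
      ultimately show ?thesis using B[OF that] approx[OF that, of j] by linarith
    qed
    show "(\<lambda>j. gs j z) \<longlonglongrightarrow> G z" if "z \<in> sphere 0 1" for z
    proof -
      have "(\<lambda>j. gs j z - G z) \<longlonglongrightarrow> 0"
        by (rule Lim_null_comparison[OF _ LIMSEQ_inverse_real_of_nat])
          (use approx[OF that] in \<open>auto simp: norm_minus_commute less_imp_le\<close>)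
      then show ?thesis by (simp add: LIM_zero_iff)
    qed
  qed
qed

text \<open>Indicators of open sets are increasing limits of the continuous functions
  \<open>min 1 (j * infdist z (- U))\<close>.\<close>

lemma coeff_limit_indicator_open:
  assumes "open U"
  shows "coeff_limit m c (indicator U)"
proof (cases "U = UNIV")
  case True
  then show ?thesis using coeff_limit_const[of 1] by simp
next
  case False
  define C where "C = - U"
  have C: "closed C" "C \<noteq> {}" using assms False by (auto simp: C_def)
  define g where "g j z = complex_of_real (min 1 (real (Suc j) * infdist z C))" for j z
  have g_cont: "continuous_on UNIV (g j)" for j
    unfolding g_def by (intro continuous_intros)
  show ?thesis
  proof (rule coeff_limit_dominated_convergence[where Gs=g and B=1])
    show "indicator U \<in> borel_measurable borel" using assms by (intro borel_measurable_indicator) auto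
    show "bounded_on_circle (g j)" for j
      using borel_measurable_continuous_onI[OF g_cont]
      by (rule bounded_on_circleI[of _ 1]) (auto simp: g_def infdist_nonneg)
    show "coeff_limit m c (g j)" for j by (rule coeff_limit_continuous[OF g_cont])
    show "cmod (g j z) \<le> 1" for j z by (auto simp: g_def infdist_nonneg)
    show "(\<lambda>j. g j z) \<longlonglongrightarrow> indicator U z" for z
    proof (cases "z \<in> U")
      case True
      then have d: "infdist z C > 0" using infdist_pos_not_in_closed[OF C] by (auto simp: C_def)
      then obtain n where n: "1 < real n * infdist z C" using ex_less_of_nat_mult by blast
      have "g j z = 1" if "n \<le> j" for j
      proof -
        have "real n * infdist z C \<le> real (Suc j) * infdist z C"
          using d that by (intro mult_right_mono) auto
        then show ?thesis using n by (auto simp: g_def)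
      qed
      then have "\<forall>\<^sub>F j in sequentially. g j z = 1" by (auto simp: eventually_sequentially)
      then show ?thesis using True by (simp add: tendsto_eventually)
    next
      case False
      then show ?thesis by (simp add: g_def C_def)
    qed
  qed
qed

text \<open>The Borel sets with this property form a Dynkin system containing the
  (intersection-stable) open sets.\<close>

lemma coeff_limit_indicator_borel:
  assumes "A \<in> sets borel"
  shows "coeff_limit m c (indicator A)"
proof -
  define D where "D = {A. A \<in> sets borel \<and> coeff_limit m c (indicator A)}"
  have "Dynkin_system UNIV D"
  proof (rule Dynkin_systemI)
    show "UNIV \<in> D" unfolding D_def using coeff_limit_const[of 1] by simp
    show "UNIV - A \<in> D" if "A \<in> D" for A
    proof -
      have A: "A \<in> sets borel" "coeff_limit m c (indicator A)" using that D_def by auto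
      have "coeff_limit m c (\<lambda>z. 1 + (-1) * indicator A z)"
        by (rule coeff_limit_add[OF bounded_on_circle_const
              bounded_on_circle_mult[OF bounded_on_circle_const bounded_on_circle_indicator[OF A(1)]]
              coeff_limit_const coeff_limit_cmult[OF A(2)]])
      moreover have "(\<lambda>z. 1 + (-1) * indicator A z) = (indicator (UNIV - A) :: complex \<Rightarrow> complex)"
        by (auto simp: indicator_def)
      ultimately show ?thesis using A unfolding D_def by auto
    qed
    show "(\<Union>i. A i) \<in> D" if disj: "disjoint_family A" and "range A \<subseteq> D" for A :: "nat \<Rightarrow> complex set"
    proof -
      have A: "A i \<in> sets borel" "coeff_limit m c (indicator (A i))" for i
        using \<open>range A \<subseteq> D\<close> D_def by auto
      have partial_sums: "(\<Sum>i<j. indicator (A i) z :: complex) = indicator (\<Union>i<j. A i) z" for j z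
        using disj by (intro indicator_UN_disjoint[symmetric]) (auto simp: disjoint_family_on_def)
      have "coeff_limit m c (indicator (\<Union>i. A i))"
      proof (rule coeff_limit_dominated_convergence[where Gs="\<lambda>j z. \<Sum>i<j. indicator (A i) z" and B=1])
        show "bounded_on_circle (\<lambda>z. \<Sum>i<j. indicator (A i) z)" for j
          by (intro bounded_on_circle_sum bounded_on_circle_indicator A) simp
        show "coeff_limit m c (\<lambda>z. \<Sum>i<j. indicator (A i) z)" for j
          by (intro coeff_limit_sum) (simp_all add: bounded_on_circle_indicator A)
        show "cmod (\<Sum>i<j. indicator (A i) z :: complex) \<le> 1" for j z
          unfolding partial_sums by (simp add: indicator_def)
        have "(\<lambda>i. indicator (A i) z :: real) sums indicator (\<Union>i. A i) z" for z
          by (rule indicator_sums) (use disj in \<open>auto simp: disjoint_family_on_def\<close>)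
        from sums_of_real[OF this] show "(\<lambda>j. \<Sum>i<j. indicator (A i) z :: complex) \<longlonglongrightarrow> indicator (\<Union>i. A i) z"
          for z unfolding sums_def by (simp only: of_real_indicator of_real_sum)
      qed (use A in auto)
      then show ?thesis using A unfolding D_def by auto
    qed
  qed (auto simp: D_def)
  then have "sigma_sets UNIV {S. open S} = D"
  proof (rule Dynkin_system.Dynkin_lemma)
    show "Int_stable {S. open S}" by (auto simp: Int_stable_def)
    show "{S. open S} \<subseteq> D" unfolding D_def using coeff_limit_indicator_open by auto
    show "D \<subseteq> sigma_sets UNIV {S. open S}" unfolding D_def using sets_borel by auto
  qed
  then show ?thesis using assms sets_borel D_def by auto
qed

lemma coeff_limit_unit_interval:
  assumes H[measurable]: "H \<in> borel_measurable borel" and H_bounds: "\<And>z. 0 \<le> H z \<and> H z \<le> 1"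
  shows "coeff_limit m c (\<lambda>z. complex_of_real (H z))"
proof -
  define level where "level j i = {z. \<lfloor>real (Suc j) * H z\<rfloor> = int i}" for j i
  have level[measurable]: "level j i \<in> sets borel" for j i unfolding level_def by measurable
  define g :: "nat \<Rightarrow> complex \<Rightarrow> complex"
    where "g j z = (\<Sum>i\<le>Suc j. (of_nat i / of_nat (Suc j)) * indicator (level j i) z)" for j z
  have g_eq: "g j z = of_real (real_of_int \<lfloor>real (Suc j) * H z\<rfloor> / real (Suc j))" for j z
  proof -
    define i0 where "i0 = nat \<lfloor>real (Suc j) * H z\<rfloor>"
    have "0 \<le> \<lfloor>real (Suc j) * H z\<rfloor>" "\<lfloor>real (Suc j) * H z\<rfloor> \<le> int (Suc j)"
      using H_bounds[of z] by (auto intro: floor_mono[of _ "real (Suc j)", simplified])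
    then have i0: "\<lfloor>real (Suc j) * H z\<rfloor> = int i0" "i0 \<le> Suc j" by (auto simp: i0_def)
    have "g j z = (\<Sum>i\<le>Suc j. if i = i0 then of_nat i / of_nat (Suc j) else 0)"
      unfolding g_def by (rule sum.cong) (use i0 in \<open>auto simp: level_def\<close>)
    also have "\<dots> = of_nat i0 / of_nat (Suc j)" using i0(2) by (simp only: sum.delta finite_atMost atMost_iff if_True)
    finally show ?thesis unfolding i0(1) by simp
  qed
  show ?thesis
  proof (rule coeff_limit_dominated_convergence[where Gs=g and B=1])
    show "bounded_on_circle (g j)" for j
      unfolding g_def
      by (intro bounded_on_circle_sum bounded_on_circle_mult bounded_on_circle_const
          bounded_on_circle_indicator level) simp
    show "coeff_limit m c (g j)" for j
      unfolding g_def
      by (intro coeff_limit_sum conjI bounded_on_circle_mult bounded_on_circle_const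
          bounded_on_circle_indicator coeff_limit_cmult coeff_limit_indicator_borel
          level) simp
    show "cmod (g j z) \<le> 1" for j z
    proof -
      have "0 \<le> real_of_int \<lfloor>real (Suc j) * H z\<rfloor> / real (Suc j)" using H_bounds[of z] by simp
      then show ?thesis
        using floor_mult_div_bounds(2)[of "Suc j" "H z"] H_bounds[of z]
        unfolding g_eq norm_of_real by linarith
    qed
    show "(\<lambda>j. g j z) \<longlonglongrightarrow> complex_of_real (H z)" for z
    proof -
      have "(\<lambda>j. real_of_int \<lfloor>real (Suc j) * H z\<rfloor> / real (Suc j) - H z) \<longlonglongrightarrow> 0"
      proof (rule Lim_null_comparison[OF always_eventually LIMSEQ_inverse_real_of_nat], intro allI)
        fix j
        show "norm (real_of_int \<lfloor>real (Suc j) * H z\<rfloor> / real (Suc j) - H z) \<le> inverse (real (Suc j))"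
          using floor_mult_div_bounds[of "Suc j" "H z"] by (simp only: real_norm_def abs_le_iff
              inverse_eq_divide) linarith
      qed
      then show ?thesis
        unfolding g_eq by (intro tendsto_of_real) (simp only: LIM_zero_iff)
    qed
  qed measurable
qed

end

lemma pow_image_weighted_limit:
  fixes j :: int and m :: "nat \<Rightarrow> int"
  assumes "\<And>k. coeff_limit (\<lambda>n. j * m n) c (\<lambda>z. z powi k)"
    and [measurable]: "H \<in> borel_measurable borel" and "\<And>x. 0 \<le> H x \<and> H x \<le> 1"
  shows "(\<lambda>n. \<integral>x. complex_of_real (H x) * x powi m n \<partial>pow_image \<sigma> j)
    \<longlonglongrightarrow> c * complex_of_real (\<integral>x. H x \<partial>pow_image \<sigma> j)"
proof -
  have powi_j: "(\<lambda>z::complex. z powi j) \<in> \<sigma> \<rightarrow>\<^sub>M borel" by (simp add: measurable_eq_borel)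
  have "coeff_limit (\<lambda>n. j * m n) c (\<lambda>z. complex_of_real (H (z powi j)))"
    by (rule coeff_limit_unit_interval[OF assms(1)]) (use assms(3) in auto)
  moreover have "(\<integral>x. complex_of_real (H x) * x powi m n \<partial>pow_image \<sigma> j)
      = (\<integral>z. complex_of_real (H (z powi j)) * z powi (j * m n) \<partial>\<sigma>)" for n
    unfolding pow_image_def by (subst integral_distr[OF powi_j]) (simp_all add: power_int_mult)
  moreover have "(\<integral>x. H x \<partial>pow_image \<sigma> j) = (\<integral>z. H (z powi j) \<partial>\<sigma>)"
    unfolding pow_image_def by (rule integral_distr[OF powi_j]) measurable
  ultimately show ?thesis by (simp add: coeff_limit_def)
qed

end

lemma distr_funpow_invariant:
  assumes P: "P \<in> M \<rightarrow>\<^sub>M M" and inv: "distr M M P = M"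
  shows "distr M M (P ^^ k) = M"
proof (induction k)
  case 0
  then show ?case by (simp add: distr_id2)
next
  case (Suc k)
  have "distr M M (P ^^ Suc k) = distr M M ((P ^^ k) \<circ> P)" by (simp only: funpow_Suc_right)
  also have "\<dots> = distr (distr M M P) M (P ^^ k)"
    by (rule distr_distr[symmetric]) (auto intro: measurable_compose_n P)
  also have "\<dots> = M" using inv Suc.IH by simp
  finally show ?case .
qed

lemma integral_comp_invariant:
  fixes u :: "'a \<Rightarrow> 'b::{banach,second_countable_topology}"
  assumes P: "P \<in> M \<rightarrow>\<^sub>M M" and inv: "distr M M P = M" and u: "u \<in> borel_measurable M"
  shows "(\<integral>y. u (P y) \<partial>M) = (\<integral>y. u y \<partial>M)"
  using integral_distr[OF P u] inv by simp

lemma measure_vimage_invariant: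
  assumes P: "P \<in> M \<rightarrow>\<^sub>M M" and inv: "distr M M P = M" and A: "A \<in> sets M"
  shows "measure M (P -` A \<inter> space M) = measure M A"
  using measure_distr[OF P A] inv by simp

lemma AE_comp_invariant:
  assumes P: "P \<in> M \<rightarrow>\<^sub>M M" and inv: "distr M M P = M" and Q: "Measurable.pred M Q"
    and "AE y in M. Q y"
  shows "AE y in M. Q (P y)"
proof -
  have "AE y in distr M M P. Q y" by (subst inv) fact
  then show ?thesis using AE_distr_iff[OF P Q[unfolded pred_def]] by simp
qed

lemma (in prob_space) AE_eq_const_if_sublevel_sets_trivial:
  fixes h :: "'a \<Rightarrow> real"
  assumes [measurable]: "h \<in> borel_measurable M"
    and trivial: "\<And>a. prob {y \<in> space M. h y \<le> a} \<in> {0, 1}"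
  shows "\<exists>C. AE y in M. h y = C"
proof -
  define L where "L a = {y \<in> space M. h y \<le> a}" for a
  have L[measurable]: "L a \<in> sets M" for a unfolding L_def by measurable
  have L_mono: "a \<le> b \<Longrightarrow> prob (L a) \<le> prob (L b)" for a b
    by (rule finite_measure_mono) (auto simp: L_def)
  have "(\<lambda>n. prob (L (real n))) \<longlonglongrightarrow> prob (\<Union>n. L (real n))"
    by (rule finite_Lim_measure_incseq) (auto simp: incseq_def L_def)
  moreover have "(\<Union>n. L (real n)) = space M"
    by (auto simp: L_def intro: real_nat_ceiling_ge)
  ultimately have "eventually (\<lambda>n. prob (L (real n)) > 1/2) sequentially"
    using prob_space by (intro order_tendstoD) auto
  then obtain n where "1/2 < prob (L (real n))" by (auto simp: eventually_sequentially)
  then have b: "prob (L (real n)) = 1" using trivial[of "real n"] by (auto simp: L_def)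
  have "(\<lambda>n. prob (L (- real n))) \<longlonglongrightarrow> prob (\<Inter>n. L (- real n))"
    by (rule finite_Lim_measure_decseq) (auto simp: decseq_def L_def)
  moreover have "(\<Inter>n. L (- real n)) = {}"
  proof -
    have "\<exists>n. - real n < h y" for y
      using real_nat_ceiling_ge[of "- h y"] by (intro exI[of _ "Suc (nat \<lceil>- h y\<rceil>)"]) linarith
    then show ?thesis by (auto simp: L_def) (meson not_less)
  qed
  ultimately have "eventually (\<lambda>n. prob (L (- real n)) < 1/2) sequentially"
    by (intro order_tendstoD) auto
  then obtain n' where "prob (L (- real n')) < 1/2" by (auto simp: eventually_sequentially)
  then have a: "prob (L (- real n')) = 0" using trivial[of "- real n'"] by (auto simp: L_def)
  define Z where "Z = {a. prob (L a) = 0}"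
  have "bdd_above Z"
  proof
    fix a assume "a \<in> Z"
    show "a \<le> real n"
    proof (rule ccontr)
      assume "\<not> a \<le> real n"
      then show False using L_mono[of "real n" a] \<open>a \<in> Z\<close> b by (simp add: Z_def)
    qed
  qed
  define C where "C = Sup Z"
  have below: "AE y in M. C - inverse (real (Suc n)) < h y" for n
  proof -
    have "Z \<noteq> {}" using a by (auto simp: Z_def)
    moreover have "C - inverse (real (Suc n)) < Sup Z" by (simp add: C_def)
    ultimately obtain a where "a \<in> Z" "C - inverse (real (Suc n)) < a"
      using less_cSup_iff[OF _ \<open>bdd_above Z\<close>] by blast
    then have "prob (L (C - inverse (real (Suc n)))) = 0"
      using L_mono[of "C - inverse (real (Suc n))" a] by (simp add: Z_def measure_nonneg antisym)
    then have "AE y in M. y \<notin> L (C - inverse (real (Suc n)))"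
      by (intro AE_I'[of "L _"]) (auto simp: emeasure_eq_measure)
    with AE_space show ?thesis by eventually_elim (auto simp: L_def)
  qed
  have above: "AE y in M. h y \<le> C + inverse (real (Suc n))" for n
  proof -
    have "C + inverse (real (Suc n)) \<notin> Z"
      using cSup_upper[OF _ \<open>bdd_above Z\<close>] by (fastforce simp: C_def)
    then have "prob (space M - L (C + inverse (real (Suc n)))) = 0"
      using trivial prob_compl[OF L] by (auto simp: Z_def L_def)
    then have "AE y in M. y \<notin> space M - L (C + inverse (real (Suc n)))"
      by (intro AE_I'[of "space M - L _"]) (auto simp: emeasure_eq_measure)
    with AE_space show ?thesis by eventually_elim (auto simp: L_def)
  qed
  have "AE y in M. \<forall>n. C - inverse (real (Suc n)) < h y \<and> h y \<le> C + inverse (real (Suc n))"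
    unfolding AE_all_countable using below above by auto
  then have "AE y in M. h y = C"
  proof eventually_elim
    case (elim y)
    show ?case
    proof (rule ccontr)
      assume "h y \<noteq> C"
      then obtain n where "inverse (real (Suc n)) < \<bar>h y - C\<bar>"
        using reals_Archimedean[of "\<bar>h y - C\<bar>"] by auto
      then show False using elim[rule_format, of n] by linarith
    qed
  qed
  then show ?thesis by blast
qed

lemma L2fun_measurable: "L2fun M f \<Longrightarrow> f \<in> borel_measurable M"
  by (simp add: L2fun_def)

lemma L2fun_add:
  assumes f: "L2fun M f" and g: "L2fun M g"
  shows "L2fun M (\<lambda>y. f y + g y)"
proof -
  note [measurable] = L2fun_measurable[OF f] L2fun_measurable[OF g]
  have bound: "(cmod (f y + g y))\<^sup>2 \<le> 2 * (cmod (f y))\<^sup>2 + 2 * (cmod (g y))\<^sup>2" for y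
  proof -
    have "(cmod (f y + g y))\<^sup>2 \<le> (cmod (f y) + cmod (g y))\<^sup>2"
      by (intro power_mono norm_triangle_ineq) simp
    also have "\<dots> \<le> 2 * (cmod (f y))\<^sup>2 + 2 * (cmod (g y))\<^sup>2"
      using zero_le_power2[of "cmod (f y) - cmod (g y)"] by (simp add: power2_diff power2_sum)
    finally show ?thesis .
  qed
  have "integrable M (\<lambda>y. (cmod (f y + g y))\<^sup>2)"
  proof (rule Bochner_Integration.integrable_bound[of _ "\<lambda>y. 2 * (cmod (f y))\<^sup>2 + 2 * (cmod (g y))\<^sup>2"])
    show "integrable M (\<lambda>y. 2 * (cmod (f y))\<^sup>2 + 2 * (cmod (g y))\<^sup>2)"
      using f g by (simp add: L2fun_def)
    show "AE y in M. norm ((cmod (f y + g y))\<^sup>2) \<le> norm (2 * (cmod (f y))\<^sup>2 + 2 * (cmod (g y))\<^sup>2)"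
      using bound by (intro always_eventually allI) simp
  qed measurable
  then show ?thesis unfolding L2fun_def by simp
qed

lemma L2fun_cmult:
  assumes "L2fun M f"
  shows "L2fun M (\<lambda>y. c * f y)"
proof -
  note [measurable] = L2fun_measurable[OF assms]
  show ?thesis using assms by (simp add: L2fun_def norm_mult power_mult_distrib)
qed

lemma L2fun_diff: "L2fun M f \<Longrightarrow> L2fun M g \<Longrightarrow> L2fun M (\<lambda>y. f y - g y)"
  using L2fun_add[of M f "\<lambda>y. -1 * g y"] L2fun_cmult[of M g "-1"] by simp

lemma L2fun_sum: "finite I \<Longrightarrow> (\<And>i. i \<in> I \<Longrightarrow> L2fun M (f i)) \<Longrightarrow> L2fun M (\<lambda>y. \<Sum>i\<in>I. f i y)"
proof (induction I rule: finite_induct)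
  case (insert i I)
  then have "L2fun M (\<lambda>y. f i y + (\<Sum>i\<in>I. f i y))" by (intro L2fun_add) auto
  with insert show ?case by simp
qed (simp add: L2fun_def)

context finite_measure
begin

lemma L2fun_bounded:
  assumes [measurable]: "f \<in> borel_measurable M" and "\<And>y. cmod (f y) \<le> B"
  shows "L2fun M f"
proof -
  have "integrable M (\<lambda>y. (cmod (f y))\<^sup>2)"
  proof (rule integrable_const_bound[of _ "B\<^sup>2"])
    show "AE y in M. norm ((cmod (f y))\<^sup>2) \<le> B\<^sup>2"
      using assms(2) by (intro always_eventually allI) (simp add: power_mono)
  qed measurable
  then show ?thesis by (simp add: L2fun_def)
qed

lemma integrable_norm_L2fun:
  assumes "L2fun M e"
  shows "integrable M (\<lambda>y. cmod (e y))"
proof (rule Bochner_Integration.integrable_bound[of _ "\<lambda>y. 1 + (cmod (e y))\<^sup>2"])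
  show "integrable M (\<lambda>y. 1 + (cmod (e y))\<^sup>2)" using assms by (simp add: L2fun_def)
  have "cmod (e y) \<le> 1 + (cmod (e y))\<^sup>2" for y
  proof (cases "cmod (e y) \<le> 1")
    case False
    then have "cmod (e y) * 1 \<le> cmod (e y) * cmod (e y)" by (intro mult_left_mono) auto
    then show ?thesis by (simp add: power2_eq_square)
  qed (simp add: add_increasing2)
  then show "AE y in M. norm (cmod (e y)) \<le> norm (1 + (cmod (e y))\<^sup>2)"
    by (intro always_eventually allI) simp
qed (rule measurable_compose[OF L2fun_measurable[OF assms] borel_measurable_norm])

lemma integrable_L2fun:
  assumes "L2fun M e"
  shows "integrable M e"
  using integrable_norm_L2fun[OF assms] L2fun_measurable[OF assms] by (simp add: integrable_norm_iff)

lemma integrable_L2fun_mult_bounded: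
  assumes e: "L2fun M e" and [measurable]: "g \<in> borel_measurable M" and "\<And>y. \<bar>g y\<bar> \<le> B"
  shows "integrable M (\<lambda>y. e y * complex_of_real (g y))"
proof (rule Bochner_Integration.integrable_bound[of _ "\<lambda>y. B * cmod (e y)"])
  show "integrable M (\<lambda>y. B * cmod (e y))" using integrable_norm_L2fun[OF e] by simp
  show "(\<lambda>y. e y * complex_of_real (g y)) \<in> borel_measurable M"
    using L2fun_measurable[OF e] by measurable
  have "norm (e y * complex_of_real (g y)) \<le> B * cmod (e y)" for y
    using assms(3)[of y] by (simp add: norm_mult mult.commute mult_right_mono)
  then show "AE y in M. norm (e y * complex_of_real (g y)) \<le> norm (B * cmod (e y))"
    by (intro always_eventually allI) (auto intro: order_trans[OF _ abs_ge_self])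
qed

text \<open>Truncation at height \<open>K\<close>: \<open>\<bar>u\<bar> \<le> K + \<bar>u\<bar>\<^sup>2 / K\<close>.\<close>

lemma integral_indicator_norm_le_L2:
  assumes u: "L2fun M u" and "0 < K" and D: "D \<in> sets M"
  shows "(\<integral>y. indicator D y * cmod (u y) \<partial>M) \<le> K * measure M D + (\<integral>y. (cmod (u y))\<^sup>2 \<partial>M) / K"
proof -
  note [measurable] = L2fun_measurable[OF u] D
  have i2: "integrable M (\<lambda>y. (cmod (u y))\<^sup>2)" using u by (simp add: L2fun_def)
  have "indicator D y * cmod (u y) \<le> K * indicator D y + (cmod (u y))\<^sup>2 / K" for y
  proof (cases "cmod (u y) \<le> K")
    case False
    then have "cmod (u y) * K \<le> (cmod (u y))\<^sup>2" by (simp add: power2_eq_square mult_left_mono)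
    then have "cmod (u y) \<le> (cmod (u y))\<^sup>2 / K" using \<open>0 < K\<close> by (simp add: field_simps)
    then show ?thesis using \<open>0 < K\<close> by (simp add: indicator_def)
  next
    case True
    moreover have "0 \<le> (cmod (u y))\<^sup>2 / K" using \<open>0 < K\<close> by simp
    ultimately show ?thesis by (cases "y \<in> D") simp_all
  qed
  moreover have "integrable M (\<lambda>y. indicator D y * cmod (u y))"
  proof (rule Bochner_Integration.integrable_bound[OF integrable_norm_L2fun[OF u]])
    show "AE y in M. norm (indicator D y * cmod (u y)) \<le> norm (cmod (u y))"
      by (intro always_eventually allI) (simp add: indicator_def)
  qed measurable
  moreover have "integrable M (\<lambda>y. K * indicator D y + (cmod (u y))\<^sup>2 / K)"
    using i2 by (intro Bochner_Integration.integrable_add integrable_mult_right integrable_divide_zero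
        integrable_real_indicator) (auto simp: less_top[symmetric])
  ultimately have "(\<integral>y. indicator D y * cmod (u y) \<partial>M) \<le> (\<integral>y. K * indicator D y + (cmod (u y))\<^sup>2 / K \<partial>M)"
    by (intro integral_mono)
  also have "\<dots> = K * measure M D + (\<integral>y. (cmod (u y))\<^sup>2 \<partial>M) / K"
    using i2 by (subst Bochner_Integration.integral_add)
      (auto intro!: integrable_mult_right integrable_real_indicator simp: less_top[symmetric])
  finally show ?thesis .
qed

lemma integral_indicator_norm_tendsto_0:
  assumes u: "L2fun M u" and D: "\<And>n. D n \<in> sets M" and "(\<lambda>n. measure M (D n)) \<longlonglongrightarrow> 0"
  shows "(\<lambda>n. \<integral>y. indicator (D n) y * cmod (u y) \<partial>M) \<longlonglongrightarrow> 0"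
proof (rule LIMSEQ_I)
  fix r :: real assume "0 < r"
  define E where "E = (\<integral>y. (cmod (u y))\<^sup>2 \<partial>M)"
  define K where "K = 2 * (E + 1) / r"
  have "0 \<le> E" unfolding E_def by simp
  then have "0 < K" "E / K < r / 2" using \<open>0 < r\<close> by (simp_all add: K_def field_simps)
  obtain N where "\<forall>n\<ge>N. norm (measure M (D n) - 0) < r / 2 / K"
    using LIMSEQ_D[OF assms(3), of "r / 2 / K"] \<open>0 < r\<close> \<open>0 < K\<close> by auto
  then have small: "K * measure M (D n) < r / 2" if "n \<ge> N" for n
    using that \<open>0 < K\<close> by (simp add: field_simps)
  have "(\<integral>y. indicator (D n) y * cmod (u y) \<partial>M) < r" if "n \<ge> N" for n
    using integral_indicator_norm_le_L2[OF u \<open>0 < K\<close> D, of n] \<open>E / K < r / 2\<close> small[OF that]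
    unfolding E_def by linarith
  then show "\<exists>N. \<forall>n\<ge>N. norm ((\<integral>y. indicator (D n) y * cmod (u y) \<partial>M) - 0) < r"
    by (intro exI[of _ N]) simp
qed

end

lemma (in prob_space) integral_norm_le_of_L2_small:
  assumes u: "L2fun M u" and "0 < d" and "(\<integral>y. (cmod (u y))\<^sup>2 \<partial>M) < d\<^sup>2"
  shows "(\<integral>y. cmod (u y) \<partial>M) \<le> 2 * d"
proof -
  have "(\<integral>y. indicator (space M) y * cmod (u y) \<partial>M)
      \<le> d * measure M (space M) + (\<integral>y. (cmod (u y))\<^sup>2 \<partial>M) / d"
    by (rule integral_indicator_norm_le_L2[OF u \<open>0 < d\<close> sets.top])
  moreover have "(\<integral>y. indicator (space M) y * cmod (u y) \<partial>M) = (\<integral>y. cmod (u y) \<partial>M)"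
    by (rule Bochner_Integration.integral_cong) auto
  moreover have "(\<integral>y. (cmod (u y))\<^sup>2 \<partial>M) / d < d"
    using assms(3) \<open>0 < d\<close> by (simp add: divide_less_eq power2_eq_square)
  ultimately show ?thesis using prob_space by simp
qed

locale mp_system = prob_space M for M :: "'a measure" +
  fixes S :: "'a \<Rightarrow> 'a"
  assumes space_eq_UNIV: "space M = UNIV"
    and automorphism: "mp_automorphism M S"
begin

abbreviation "T \<equiv> inv S"

lemma bij_S: "bij S" using automorphism mp_automorphism_def by auto
lemma inv_S_S[simp]: "T (S y) = y" using bij_S by (simp add: bij_is_inj)
lemma S_inv_S[simp]: "S (T y) = y" using bij_S by (simp add: bij_is_surj surj_f_inv_f)
lemma S_measurable[measurable]: "S \<in> M \<rightarrow>\<^sub>M M" using automorphism mp_automorphism_def by auto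
lemma T_measurable[measurable]: "T \<in> M \<rightarrow>\<^sub>M M" using automorphism mp_automorphism_def by auto
lemma distr_S: "distr M M S = M" using automorphism mp_automorphism_def by auto
lemma distr_T: "distr M M T = M" using automorphism mp_automorphism_def by auto

lemma funpow_S_measurable[measurable]: "(S ^^ k) \<in> M \<rightarrow>\<^sub>M M"
  by (rule measurable_compose_n[OF S_measurable])

lemma funpow_T_measurable[measurable]: "(T ^^ k) \<in> M \<rightarrow>\<^sub>M M"
  by (rule measurable_compose_n[OF T_measurable])

lemma distr_funpow_S: "distr M M (S ^^ k) = M" by (rule distr_funpow_invariant[OF S_measurable distr_S])
lemma distr_funpow_T: "distr M M (T ^^ k) = M" by (rule distr_funpow_invariant[OF T_measurable distr_T])

lemma funpow_S_funpow_T[simp]: "(S ^^ k) ((T ^^ k) y) = y"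
proof (induction k arbitrary: y)
  case (Suc k)
  have "(S ^^ Suc k) ((T ^^ Suc k) y) = (S ^^ k) (S (T ((T ^^ k) y)))"
    by (simp only: funpow_Suc_right[of _ S] funpow.simps(2)[of _ T] comp_apply)
  then show ?case using Suc by simp
qed simp

lemma funpow_T_Suc_S: "(T ^^ Suc k) (S y) = (T ^^ k) y"
  by (simp only: funpow_Suc_right comp_apply inv_S_S)

lemma funpow_S_Suc: "(S ^^ Suc k) y = (S ^^ k) (S y)"
  by (simp only: funpow_Suc_right comp_apply)

definition S_powi :: "int \<Rightarrow> 'a \<Rightarrow> 'a" where
  "S_powi m = (if 0 \<le> m then S ^^ nat m else T ^^ nat (- m))"

lemma S_powi_measurable[measurable]: "S_powi m \<in> M \<rightarrow>\<^sub>M M"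
  by (simp add: S_powi_def)

lemma AE_invariant_set_imp_invariant:
  assumes A[measurable]: "A \<in> sets M" and inv: "AE y in M. S y \<in> A \<longleftrightarrow> y \<in> A"
  obtains B where "B \<in> sets M" "S -` B \<inter> space M = B" "AE y in M. y \<in> B \<longleftrightarrow> y \<in> A"
proof -
  have "AE y in M. (S ^^ k) y \<in> A \<longleftrightarrow> y \<in> A" for k
  proof (induction k)
    case (Suc k)
    have "AE y in M. (S ^^ k) (S y) \<in> A \<longleftrightarrow> S y \<in> A"
      by (rule AE_comp_invariant[OF S_measurable distr_S _ Suc]) measurable
    then show ?case using inv by eventually_elim (simp only: funpow_S_Suc)
  qed simp
  then have orbit: "AE y in M. \<forall>k. (S ^^ k) y \<in> A \<longleftrightarrow> y \<in> A" by (simp add: AE_all_countable)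
  define B where "B = {y \<in> space M. \<forall>k. \<exists>j\<ge>k. (S ^^ j) y \<in> A}"
  have "B \<in> sets M" unfolding B_def by measurable
  moreover have "S -` B \<inter> space M = B"
  proof -
    have "(\<forall>k. \<exists>j\<ge>k. (S ^^ Suc j) y \<in> A) \<longleftrightarrow> (\<forall>k. \<exists>j\<ge>k. (S ^^ j) y \<in> A)" for y
    proof (intro iffI allI)
      fix k assume "\<forall>k. \<exists>j\<ge>k. (S ^^ Suc j) y \<in> A"
      then obtain j where "j \<ge> k" "(S ^^ Suc j) y \<in> A" by blast
      then show "\<exists>j\<ge>k. (S ^^ j) y \<in> A" by (intro exI[of _ "Suc j"]) auto
    next
      fix k assume "\<forall>k. \<exists>j\<ge>k. (S ^^ j) y \<in> A"
      then obtain j where "j \<ge> Suc k" "(S ^^ j) y \<in> A" by blast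
      then show "\<exists>j\<ge>k. (S ^^ Suc j) y \<in> A" by (intro exI[of _ "j - 1"]) auto
    qed
    then have "(\<forall>k. \<exists>j\<ge>k. (S ^^ j) (S y) \<in> A) \<longleftrightarrow> (\<forall>k. \<exists>j\<ge>k. (S ^^ j) y \<in> A)" for y
      by (simp only: funpow_S_Suc)
    then show ?thesis by (auto simp: B_def space_eq_UNIV)
  qed
  moreover have "AE y in M. y \<in> B \<longleftrightarrow> y \<in> A"
    using orbit by eventually_elim (auto simp: B_def space_eq_UNIV)
  ultimately show ?thesis using that by blast
qed

lemma ergodic_AE_invariant_set:
  assumes "ergodic M S" and A: "A \<in> sets M" and "AE y in M. S y \<in> A \<longleftrightarrow> y \<in> A"
  shows "prob A \<in> {0, 1}"
proof -
  obtain B where B: "B \<in> sets M" "S -` B \<inter> space M = B" and AE: "AE y in M. y \<in> B \<longleftrightarrow> y \<in> A"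
    using AE_invariant_set_imp_invariant[OF assms(2,3)] by blast
  have "prob B = prob A" by (rule finite_measure_eq_AE[OF AE B(1) A])
  moreover have "prob B \<in> {0, 1}" using \<open>ergodic M S\<close> B unfolding ergodic_def by blast
  ultimately show ?thesis by simp
qed

lemma ergodic_AE_invariant_function_const:
  fixes h :: "'a \<Rightarrow> real"
  assumes "ergodic M S" and [measurable]: "h \<in> borel_measurable M" and inv: "AE y in M. h (S y) = h y"
  shows "\<exists>C. AE y in M. h y = C"
proof (rule AE_eq_const_if_sublevel_sets_trivial)
  show "prob {y \<in> space M. h y \<le> a} \<in> {0, 1}" for a
    by (rule ergodic_AE_invariant_set[OF \<open>ergodic M S\<close>], measurable)
      (use inv in \<open>eventually_elim, simp add: space_eq_UNIV\<close>)
qed fact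

lemma ergodic_AE_invariant_complex_function_const:
  fixes e :: "'a \<Rightarrow> complex"
  assumes "ergodic M S" and [measurable]: "e \<in> borel_measurable M" and inv: "AE y in M. e (S y) = e y"
  shows "\<exists>C. AE y in M. e y = C"
proof -
  have "AE y in M. Re (e (S y)) = Re (e y)" "AE y in M. Im (e (S y)) = Im (e y)"
    using inv by (eventually_elim, simp)+
  moreover have "(\<lambda>y. Re (e y)) \<in> borel_measurable M" "(\<lambda>y. Im (e y)) \<in> borel_measurable M"
    by measurable
  ultimately obtain a b where a: "AE y in M. Re (e y) = a" and b: "AE y in M. Im (e y) = b"
    using ergodic_AE_invariant_function_const[OF \<open>ergodic M S\<close>] by blast
  from a b have "AE y in M. e y = Complex a b" by eventually_elim (simp add: complex_eq_iff)
  then show ?thesis by blast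
qed

end

lemma minus_one_power_mod2: "(-1::real) ^ (a mod 2) = (-1) ^ a"
  by (simp add: minus_one_power_iff)

locale binary_cocycle = mp_system +
  fixes \<phi> :: "'a \<Rightarrow> nat"
  assumes \<phi>_measurable[measurable]: "\<phi> \<in> borel_measurable M"
    and \<phi>_binary: "\<And>y. \<phi> y \<in> {0, 1}"
begin

definition eps :: "'a \<Rightarrow> real" where "eps y = (-1) ^ \<phi> y"

definition eps_cocycle :: "int \<Rightarrow> 'a \<Rightarrow> real" where
  "eps_cocycle m y = (-1) ^ cocycle S \<phi> m y"

lemma \<phi>_measurable_count_space[measurable]: "\<phi> \<in> M \<rightarrow>\<^sub>M count_space UNIV"
  by (rule measurable_count_space_eq2_countable[THEN iffD2]) (auto intro: measurable_sets[OF \<phi>_measurable])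

lemma eps_squared: "eps y * eps y = 1"
  by (simp add: eps_def flip: power_add)

lemma abs_eps: "\<bar>eps y\<bar> = 1"
  using \<phi>_binary[of y] by (auto simp: eps_def)

lemma eps_measurable[measurable]: "eps \<in> borel_measurable M"
  unfolding eps_def by measurable

lemma abs_eps_cocycle: "\<bar>eps_cocycle m y\<bar> = 1"
  by (simp add: eps_cocycle_def)

lemma eps_cocycle_0: "eps_cocycle 0 y = 1"
  by (simp add: eps_cocycle_def cocycle_def)

lemma eps_cocycle_nonneg: "eps_cocycle (int n) y = (\<Prod>k<n. eps ((S ^^ k) y))"
  unfolding eps_cocycle_def cocycle_def eps_def by (simp add: minus_one_power_mod2 power_sum)

lemma eps_cocycle_neg: "eps_cocycle (- int n) y = (\<Prod>k\<in>{1..n}. eps ((T ^^ k) y))"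
  unfolding eps_cocycle_def cocycle_def eps_def
  by (cases "n = 0") (simp_all add: minus_one_power_mod2 power_sum)

lemma eps_cocycle_measurable[measurable]: "eps_cocycle m \<in> borel_measurable M"
proof (cases "0 \<le> m")
  case True
  then have "eps_cocycle m = (\<lambda>y. \<Prod>k<nat m. eps ((S ^^ k) y))"
    using eps_cocycle_nonneg[of "nat m"] by auto
  then show ?thesis by simp
next
  case False
  then have "eps_cocycle m = (\<lambda>y. \<Prod>k\<in>{1..nat (- m)}. eps ((T ^^ k) y))"
    using eps_cocycle_neg[of "nat (- m)"] by auto
  then show ?thesis by simp
qed

lemma eps_cocycle_Suc_left: "eps_cocycle (m + 1) y = eps y * eps_cocycle m (S y)"
proof (cases "0 \<le> m")
  case True
  define n where "n = nat m"
  have m: "m = int n" using True by (simp add: n_def)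
  have Suc_n: "int n + 1 = int (Suc n)" by simp
  show ?thesis
    unfolding m Suc_n eps_cocycle_nonneg by (simp only: prod.lessThan_Suc_shift funpow_S_Suc funpow_0)
next
  case False
  define n where "n = nat (- m - 1)"
  have m: "m = - int (Suc n)" using False by (simp add: n_def)
  have "(\<Prod>k\<in>{1..Suc n}. eps ((T ^^ k) (S y))) = (\<Prod>k<Suc n. eps ((T ^^ k) y))"
    by (simp only: One_nat_def prod.atLeast1_atMost_eq funpow_T_Suc_S)
  also have "\<dots> = eps y * (\<Prod>k\<in>{1..n}. eps ((T ^^ k) y))"
    by (simp only: prod.lessThan_Suc_shift funpow_0 One_nat_def prod.atLeast1_atMost_eq)
  finally have "eps_cocycle (- int n) y = eps y * eps_cocycle (- int (Suc n)) (S y)"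
    unfolding eps_cocycle_neg by (simp add: mult.assoc[symmetric] eps_squared)
  then show ?thesis by (simp add: m)
qed

lemma eps_cocycle_Suc_right: "eps_cocycle (m + 1) y = eps_cocycle m y * eps (S_powi m y)"
proof (cases "0 \<le> m")
  case True
  define n where "n = nat m"
  have m: "m = int n" using True by (simp add: n_def)
  have Suc_n: "int n + 1 = int (Suc n)" by simp
  show ?thesis
    unfolding m Suc_n eps_cocycle_nonneg by (simp add: S_powi_def)
next
  case False
  define n where "n = nat (- m - 1)"
  have m: "m = - int (Suc n)" using False by (simp add: n_def)
  have "eps_cocycle (- int n) y = eps_cocycle (- int (Suc n)) y * eps ((T ^^ Suc n) y)"
    unfolding eps_cocycle_neg by (simp add: mult.assoc eps_squared)
  moreover have "S_powi (- int (Suc n)) = T ^^ Suc n"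
    unfolding S_powi_def by (simp del: of_nat_Suc funpow.simps)
  ultimately show ?thesis by (simp add: m)
qed

definition sign_change :: "('a \<Rightarrow> 'a) \<Rightarrow> 'a set" where
  "sign_change P = {y. eps (P y) \<noteq> eps y}"

lemma sets_sign_change[measurable]:
  assumes [measurable]: "P \<in> M \<rightarrow>\<^sub>M M"
  shows "sign_change P \<in> sets M"
proof -
  have "sign_change P = {y \<in> space M. eps (P y) \<noteq> eps y}"
    using space_eq_UNIV by (auto simp: sign_change_def)
  then show ?thesis by simp
qed

lemma integral_eps_comp_mult_eps:
  assumes "P \<in> M \<rightarrow>\<^sub>M M"
  shows "(\<integral>y. eps (P y) * eps y \<partial>M) = 1 - 2 * prob (sign_change P)"
proof -
  have "eps (P y) * eps y = 1 - 2 * indicator (sign_change P) y" for y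
    using abs_eps[of "P y"] abs_eps[of y] by (auto simp: sign_change_def indicator_def abs_if split: if_splits)
  then have "(\<integral>y. eps (P y) * eps y \<partial>M) = (\<integral>y. 1 - 2 * indicator (sign_change P) y \<partial>M)"
    by simp
  also have "\<dots> = (\<integral>y. 1 \<partial>M) - (\<integral>y. 2 * indicator (sign_change P) y \<partial>M)"
    by (rule Bochner_Integration.integral_diff)
      (use assms in \<open>auto intro!: integrable_real_indicator simp: less_top[symmetric]\<close>)
  also have "\<dots> = 1 - 2 * prob (sign_change P)"
    using assms prob_space space_eq_UNIV by simp
  finally show ?thesis .
qed

lemma L2fun_of_real_eps: "L2fun M (\<lambda>y. complex_of_real (eps y))"
  unfolding L2fun_def using abs_eps by (simp add: power2_eq_square)

text \<open>Rigidity of the \<open>L\<^sup>2\<close>-function \<open>eps\<close>: \<open>\<langle>eps \<circ> S\<^bsup>q n\<^esup>, eps\<rangle> \<longlonglongrightarrow> 1\<close>.\<close>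

lemma prob_sign_change_rigid:
  assumes "weakly_rigid M S q"
  shows "(\<lambda>n. prob (sign_change (S ^^ q n))) \<longlonglongrightarrow> 0"
proof -
  have "(\<lambda>n. \<integral>y. complex_of_real (eps ((S ^^ q n) y)) * cnj (complex_of_real (eps y)) \<partial>M)
      \<longlonglongrightarrow> (\<integral>y. complex_of_real (eps y) * cnj (complex_of_real (eps y)) \<partial>M)"
    using assms L2fun_of_real_eps unfolding weakly_rigid_def by blast
  then have "(\<lambda>n. complex_of_real (\<integral>y. eps ((S ^^ q n) y) * eps y \<partial>M)) \<longlonglongrightarrow> complex_of_real 1"
    using prob_space space_eq_UNIV by (simp add: eps_squared flip: of_real_mult)
  then have "(\<lambda>n. \<integral>y. eps ((S ^^ q n) y) * eps y \<partial>M) \<longlonglongrightarrow> 1"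
    by (simp only: tendsto_of_real_iff)
  then have "(\<lambda>n. (1 - (1 - 2 * prob (sign_change (S ^^ q n)))) / 2) \<longlonglongrightarrow> (1 - 1) / 2"
    unfolding integral_eps_comp_mult_eps[OF funpow_S_measurable] by (intro tendsto_intros) auto
  then show ?thesis by simp
qed

lemma sign_change_funpow_mult:
  "sign_change (S ^^ (a * k)) \<subseteq> (\<Union>i<k. (S ^^ (a * i)) -` sign_change (S ^^ a))"
proof (induction k)
  case (Suc k)
  have "(S ^^ (a * Suc k)) y = (S ^^ a) ((S ^^ (a * k)) y)" for y
    by (simp only: mult_Suc_right funpow_add comp_apply)
  with Suc show ?case by (fastforce simp: sign_change_def)
qed (simp add: sign_change_def)

lemma prob_sign_change_funpow_mult: "prob (sign_change (S ^^ (a * k))) \<le> k * prob (sign_change (S ^^ a))"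
proof -
  have "prob (sign_change (S ^^ (a * k))) \<le> prob (\<Union>i<k. (S ^^ (a * i)) -` sign_change (S ^^ a))"
    by (rule finite_measure_mono[OF sign_change_funpow_mult])
      (use measurable_sets[OF funpow_S_measurable] space_eq_UNIV in auto)
  also have "\<dots> \<le> (\<Sum>i<k. prob ((S ^^ (a * i)) -` sign_change (S ^^ a)))"
    by (rule finite_measure_subadditive_finite)
      (use measurable_sets[OF funpow_S_measurable] space_eq_UNIV in auto)
  also have "\<dots> = (\<Sum>i<k. prob (sign_change (S ^^ a)))"
    using measure_vimage_invariant[OF funpow_S_measurable distr_funpow_S] space_eq_UNIV by simp
  finally show ?thesis by simp
qed

lemma prob_sign_change_funpow_T: "prob (sign_change (T ^^ b)) = prob (sign_change (S ^^ b))"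
proof -
  have "sign_change (T ^^ b) = (T ^^ b) -` sign_change (S ^^ b)"
    by (auto simp: sign_change_def)
  then show ?thesis
    using measure_vimage_invariant[OF funpow_T_measurable distr_funpow_T] space_eq_UNIV by simp
qed

lemma prob_sign_change_S_powi_mult:
  "prob (sign_change (S_powi (j * int a))) \<le> nat \<bar>j\<bar> * prob (sign_change (S ^^ a))"
proof (cases "0 \<le> j")
  case True
  then have "S_powi (j * int a) = S ^^ (a * nat j)"
    by (simp add: S_powi_def nat_mult_distrib mult.commute)
  then show ?thesis using prob_sign_change_funpow_mult[of a "nat j"] True by simp
next
  case False
  have "S_powi (j * int a) = T ^^ (a * nat (- j))"
  proof (cases "a = 0")
    case False
    then have "\<not> 0 \<le> j * int a" using \<open>\<not> 0 \<le> j\<close> by (simp add: zero_le_mult_iff)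
    moreover have "nat (- (j * int a)) = a * nat (- j)"
      using \<open>\<not> 0 \<le> j\<close> by (simp add: nat_mult_distrib mult.commute flip: mult_minus_left)
    ultimately show ?thesis by (simp add: S_powi_def)
  qed (simp add: S_powi_def)
  then show ?thesis
    using prob_sign_change_funpow_mult[of a "nat (- j)"] False prob_sign_change_funpow_T by simp
qed

lemma prob_sign_change_rigid_multiple:
  assumes "weakly_rigid M S q"
  shows "(\<lambda>n. prob (sign_change (S_powi (j * int (q n))))) \<longlonglongrightarrow> 0"
proof (rule tendsto_sandwich[where f="\<lambda>n. 0" and h="\<lambda>n. nat \<bar>j\<bar> * prob (sign_change (S ^^ q n))"])
  show "(\<lambda>n. nat \<bar>j\<bar> * prob (sign_change (S ^^ q n))) \<longlonglongrightarrow> 0"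
    using tendsto_mult_left[OF prob_sign_change_rigid[OF assms], of "real (nat \<bar>j\<bar>)"] by simp
qed (use prob_sign_change_S_powi_mult in auto)

lemma eps_cocycle_shift_bound: "\<bar>eps_cocycle m (S y) - eps_cocycle m y\<bar> \<le> 2 * indicator (sign_change (S_powi m)) y"
proof (cases "y \<in> sign_change (S_powi m)")
  case True
  then show ?thesis
    using abs_triangle_ineq4[of "eps_cocycle m (S y)" "eps_cocycle m y"] by (simp add: abs_eps_cocycle)
next
  case False
  then have "eps (S_powi m y) = eps y" by (simp add: sign_change_def)
  then have "eps y * eps_cocycle m (S y) = eps y * eps_cocycle m y"
    using eps_cocycle_Suc_left[of m y] eps_cocycle_Suc_right[of m y] by (metis mult.commute)
  moreover have "eps y \<noteq> 0" using abs_eps[of y] by auto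
  ultimately show ?thesis by simp
qed

lemma norm_integral_eps_cocycle_shift_le:
  assumes e: "L2fun M e"
  shows "norm ((\<integral>y. e y * eps_cocycle m (S y) \<partial>M) - (\<integral>y. e y * eps_cocycle m y \<partial>M))
    \<le> 2 * (\<integral>y. indicator (sign_change (S_powi m)) y * cmod (e y) \<partial>M)"
proof -
  note [measurable] = L2fun_measurable[OF e]
  have int_shift: "integrable M (\<lambda>y. e y * eps_cocycle m (S y))"
    and int: "integrable M (\<lambda>y. e y * eps_cocycle m y)"
    by (rule integrable_L2fun_mult_bounded[OF e _ abs_eps_cocycle[THEN eq_refl]], measurable)+
  have int_ind: "integrable M (\<lambda>y. indicator (sign_change (S_powi m)) y * cmod (e y))"
  proof (rule Bochner_Integration.integrable_bound[OF integrable_norm_L2fun[OF e]])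
    show "AE y in M. norm (indicator (sign_change (S_powi m)) y * cmod (e y)) \<le> norm (cmod (e y))"
      by (intro always_eventually allI) (simp add: indicator_def)
  qed measurable
  have "norm ((\<integral>y. e y * eps_cocycle m (S y) \<partial>M) - (\<integral>y. e y * eps_cocycle m y \<partial>M))
      = norm (\<integral>y. e y * eps_cocycle m (S y) - e y * eps_cocycle m y \<partial>M)"
    by (simp add: Bochner_Integration.integral_diff[OF int_shift int])
  also have "\<dots> \<le> (\<integral>y. norm (e y * eps_cocycle m (S y) - e y * eps_cocycle m y) \<partial>M)"
    by (rule integral_norm_bound)
  also have "\<dots> \<le> (\<integral>y. 2 * (indicator (sign_change (S_powi m)) y * cmod (e y)) \<partial>M)"
  proof (rule integral_mono)
    show "integrable M (\<lambda>y. norm (e y * eps_cocycle m (S y) - e y * eps_cocycle m y))"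
      by (intro integrable_norm Bochner_Integration.integrable_diff int_shift int)
    show "integrable M (\<lambda>y. 2 * (indicator (sign_change (S_powi m)) y * cmod (e y)))"
      using int_ind by simp
    fix y
    have "norm (e y * eps_cocycle m (S y) - e y * eps_cocycle m y)
        = cmod (e y) * \<bar>eps_cocycle m (S y) - eps_cocycle m y\<bar>"
      by (simp add: norm_mult flip: right_diff_distrib of_real_diff)
    also have "\<dots> \<le> cmod (e y) * (2 * indicator (sign_change (S_powi m)) y)"
      by (intro mult_left_mono eps_cocycle_shift_bound) simp
    finally show "norm (e y * eps_cocycle m (S y) - e y * eps_cocycle m y)
        \<le> 2 * (indicator (sign_change (S_powi m)) y * cmod (e y))"
      by (simp add: mult_ac)
  qed
  finally show ?thesis by simp
qed

text \<open>If \<open>e \<circ> S = \<mu> e\<close> with \<open>\<mu> \<noteq> 1\<close>, the integrals \<open>I n\<close> against \<open>eps_cocycle (m n)\<close> satisfy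
  \<open>I n \<approx> \<mu> I n\<close>, hence vanish in the limit, as does \<open>\<integral> e\<close>; if \<open>\<mu> = 1\<close>, ergodicity makes \<open>e\<close>
  constant.\<close>

lemma eigenfunction_eps_cocycle_limit:
  assumes "ergodic M S" and "eigenfunction M S e"
    and lim: "(\<lambda>n. \<integral>y. eps_cocycle (m n) y \<partial>M) \<longlonglongrightarrow> c"
    and small: "(\<lambda>n. prob (sign_change (S_powi (m n)))) \<longlonglongrightarrow> 0"
  shows "(\<lambda>n. \<integral>y. e y * eps_cocycle (m n) y \<partial>M) \<longlonglongrightarrow> complex_of_real c * (\<integral>y. e y \<partial>M)"
proof -
  obtain \<mu> where e: "L2fun M e" and eigen: "AE y in M. e (S y) = \<mu> * e y"
    using \<open>eigenfunction M S e\<close> unfolding eigenfunction_def by blast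
  note [measurable] = L2fun_measurable[OF e]
  define I where "I n = (\<integral>y. e y * eps_cocycle (m n) y \<partial>M)" for n
  define J where "J n = (\<integral>y. e y * eps_cocycle (m n) (S y) \<partial>M)" for n
  have I_eq: "I n = \<mu> * J n" for n
  proof -
    have "I n = (\<integral>y. e (S y) * eps_cocycle (m n) (S y) \<partial>M)"
      unfolding I_def by (rule integral_comp_invariant[OF S_measurable distr_S, symmetric]) measurable
    also have "\<dots> = (\<integral>y. \<mu> * (e y * eps_cocycle (m n) (S y)) \<partial>M)"
      by (rule integral_cong_AE) (measurable, use eigen in \<open>eventually_elim, simp\<close>)
    finally show ?thesis by (simp add: J_def)
  qed
  have "(\<lambda>n. \<integral>y. indicator (sign_change (S_powi (m n))) y * cmod (e y) \<partial>M) \<longlonglongrightarrow> 0"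
    using integral_indicator_norm_tendsto_0[where D="\<lambda>n. sign_change (S_powi (m n))",
        OF e sets_sign_change[OF S_powi_measurable] small] .
  then have bound_lim: "(\<lambda>n. 2 * (\<integral>y. indicator (sign_change (S_powi (m n))) y * cmod (e y) \<partial>M)) \<longlonglongrightarrow> 0"
    using tendsto_mult_left by fastforce
  have bound: "\<forall>n. norm (J n - I n) \<le> 2 * (\<integral>y. indicator (sign_change (S_powi (m n))) y * cmod (e y) \<partial>M)"
    unfolding I_def J_def using norm_integral_eps_cocycle_shift_le[OF e] by blast
  have JI: "(\<lambda>n. J n - I n) \<longlonglongrightarrow> 0"
    by (rule Lim_null_comparison[OF always_eventually[OF bound] bound_lim])
  show ?thesis
  proof (cases "\<mu> = 1")
    case True
    then have "AE y in M. e (S y) = e y" using eigen by simp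
    then obtain C where C: "AE y in M. e y = C"
      using ergodic_AE_invariant_complex_function_const[OF \<open>ergodic M S\<close> L2fun_measurable[OF e]] by blast
    have "I n = C * complex_of_real (\<integral>y. eps_cocycle (m n) y \<partial>M)" for n
    proof -
      have "I n = (\<integral>y. C * complex_of_real (eps_cocycle (m n) y) \<partial>M)"
        unfolding I_def by (rule integral_cong_AE) (measurable, use C in \<open>eventually_elim, simp\<close>)
      then show ?thesis by simp
    qed
    moreover have "(\<integral>y. e y \<partial>M) = C"
      using integral_cong_AE[of e M "\<lambda>_. C"] C prob_space space_eq_UNIV by simp
    moreover have "(\<lambda>n. C * complex_of_real (\<integral>y. eps_cocycle (m n) y \<partial>M)) \<longlonglongrightarrow> C * complex_of_real c"
      by (intro tendsto_intros lim)
    ultimately show ?thesis unfolding I_def[symmetric] by (simp add: mult.commute)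
  next
    case False
    have "(\<integral>y. e y \<partial>M) = (\<integral>y. e (S y) \<partial>M)"
      by (rule integral_comp_invariant[OF S_measurable distr_S, symmetric]) measurable
    also have "\<dots> = (\<integral>y. \<mu> * e y \<partial>M)"
      by (rule integral_cong_AE) (measurable, use eigen in simp)
    finally have "(1 - \<mu>) * (\<integral>y. e y \<partial>M) = 0" by (simp add: algebra_simps)
    then have "(\<integral>y. e y \<partial>M) = 0" using False by simp
    moreover have "I n = \<mu> / (1 - \<mu>) * (J n - I n)" for n
      using I_eq[of n] False by (simp add: field_simps)
    moreover have "(\<lambda>n. \<mu> / (1 - \<mu>) * (J n - I n)) \<longlonglongrightarrow> \<mu> / (1 - \<mu>) * 0"
      by (intro tendsto_intros JI)
    ultimately show ?thesis unfolding I_def by simp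
  qed
qed

context
  fixes m :: "nat \<Rightarrow> int" and c :: real
  assumes ergodic: "ergodic M S"
    and lim: "(\<lambda>n. \<integral>y. eps_cocycle (m n) y \<partial>M) \<longlonglongrightarrow> c"
    and small: "(\<lambda>n. prob (sign_change (S_powi (m n)))) \<longlonglongrightarrow> 0"
begin

lemma eigenfunction_span_eps_cocycle_limit:
  assumes "finite F" "\<And>f. f \<in> F \<Longrightarrow> eigenfunction M S f"
  shows "(\<lambda>n. \<integral>y. (\<Sum>f\<in>F. a f * f y) * eps_cocycle (m n) y \<partial>M)
    \<longlonglongrightarrow> complex_of_real c * (\<integral>y. (\<Sum>f\<in>F. a f * f y) \<partial>M)"
proof -
  have L2: "L2fun M f" if "f \<in> F" for f using assms(2)[OF that] by (simp add: eigenfunction_def)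
  have "(\<integral>y. (\<Sum>f\<in>F. a f * f y) * eps_cocycle (m n) y \<partial>M)
      = (\<Sum>f\<in>F. a f * (\<integral>y. f y * eps_cocycle (m n) y \<partial>M))" for n
    using integrable_L2fun_mult_bounded[OF L2 eps_cocycle_measurable abs_eps_cocycle[THEN eq_refl]]
    by (simp add: sum_distrib_right mult.assoc)
  moreover have "(\<integral>y. (\<Sum>f\<in>F. a f * f y) \<partial>M) = (\<Sum>f\<in>F. a f * (\<integral>y. f y \<partial>M))"
    using integrable_L2fun[OF L2] by simp
  moreover have "(\<lambda>n. \<Sum>f\<in>F. a f * (\<integral>y. f y * eps_cocycle (m n) y \<partial>M))
      \<longlonglongrightarrow> (\<Sum>f\<in>F. a f * (complex_of_real c * (\<integral>y. f y \<partial>M)))"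
    by (rule tendsto_sum, rule tendsto_mult_left,
        rule eigenfunction_eps_cocycle_limit[OF ergodic assms(2) lim small])
  ultimately show ?thesis by (simp add: sum_distrib_left mult_ac)
qed

text \<open>Discrete spectrum: approximate \<open>G\<close> in \<open>L\<^sup>2\<close>, hence in \<open>L\<^sup>1\<close>, by finite combinations of
  eigenfunctions; \<open>\<bar>eps_cocycle\<bar> = 1\<close> makes the error uniform in \<open>n\<close>.\<close>

lemma eps_cocycle_limit_L2fun:
  assumes "discrete_spectrum M S" and G: "L2fun M G"
  shows "(\<lambda>n. \<integral>y. G y * eps_cocycle (m n) y \<partial>M) \<longlonglongrightarrow> complex_of_real c * (\<integral>y. G y \<partial>M)"
proof -
  have "\<forall>j. \<exists>F a. finite F \<and> (\<forall>f\<in>F. eigenfunction M S f) \<and>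
      (\<integral>y. (cmod (G y - (\<Sum>f\<in>F. a f * f y)))\<^sup>2 \<partial>M) < (inverse (real (Suc j)))\<^sup>2"
  proof
    fix j :: nat
    have "0 < (inverse (real (Suc j)))\<^sup>2" by simp
    then show "\<exists>F a. finite F \<and> (\<forall>f\<in>F. eigenfunction M S f) \<and>
      (\<integral>y. (cmod (G y - (\<Sum>f\<in>F. a f * f y)))\<^sup>2 \<partial>M) < (inverse (real (Suc j)))\<^sup>2"
      using assms unfolding discrete_spectrum_def by blast
  qed
  from choice[OF this] obtain F where "\<forall>j. \<exists>a. finite (F j) \<and> (\<forall>f\<in>F j. eigenfunction M S f) \<and>
      (\<integral>y. (cmod (G y - (\<Sum>f\<in>F j. a f * f y)))\<^sup>2 \<partial>M) < (inverse (real (Suc j)))\<^sup>2"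
    by blast
  from choice[OF this] obtain a where F: "\<And>j. finite (F j)" "\<And>j f. f \<in> F j \<Longrightarrow> eigenfunction M S f"
    and approx: "\<And>j. (\<integral>y. (cmod (G y - (\<Sum>f\<in>F j. a j f * f y)))\<^sup>2 \<partial>M) < (inverse (real (Suc j)))\<^sup>2"
    by blast
  define P where "P j y = (\<Sum>f\<in>F j. a j f * f y)" for j y
  have P: "L2fun M (P j)" for j
    unfolding P_def using F by (intro L2fun_sum L2fun_cmult) (auto simp: eigenfunction_def)
  have L1: "(\<integral>y. cmod (P j y - G y) \<partial>M) \<le> 2 * inverse (real (Suc j))" for j
    using integral_norm_le_of_L2_small[OF L2fun_diff[OF G P] _ approx[of j, folded P_def]]
    by (simp add: norm_minus_commute)
  have int_F: "integrable M (\<lambda>y. H y * eps_cocycle (m n) y)" if "L2fun M H" for H n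
    by (rule integrable_L2fun_mult_bounded[OF that eps_cocycle_measurable abs_eps_cocycle[THEN eq_refl]])
  define \<delta> where "\<delta> j = (1 + \<bar>c\<bar>) * (2 * inverse (real (Suc j)))" for j
  show ?thesis
  proof (rule LIMSEQ_of_uniform_approximations[where \<delta>=\<delta>])
    show "(\<lambda>n. \<integral>y. P j y * eps_cocycle (m n) y \<partial>M) \<longlonglongrightarrow> complex_of_real c * (\<integral>y. P j y \<partial>M)" for j
      unfolding P_def by (rule eigenfunction_span_eps_cocycle_limit[OF F])
    show "norm ((\<integral>y. P j y * eps_cocycle (m n) y \<partial>M) - (\<integral>y. G y * eps_cocycle (m n) y \<partial>M)) \<le> \<delta> j"
      for j n
    proof -
      have "norm ((\<integral>y. P j y * eps_cocycle (m n) y \<partial>M) - (\<integral>y. G y * eps_cocycle (m n) y \<partial>M))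
          \<le> (\<integral>y. norm (P j y * eps_cocycle (m n) y - G y * eps_cocycle (m n) y) \<partial>M)"
        using integral_norm_bound[of M "\<lambda>y. P j y * eps_cocycle (m n) y - G y * eps_cocycle (m n) y"]
        by (simp add: Bochner_Integration.integral_diff[OF int_F[OF P] int_F[OF G]])
      also have "\<dots> = (\<integral>y. cmod (P j y - G y) \<partial>M)"
        by (rule Bochner_Integration.integral_cong) (auto simp: norm_mult abs_eps_cocycle
            simp flip: left_diff_distrib)
      also have "\<dots> \<le> \<delta> j"
      proof -
        have "0 \<le> \<bar>c\<bar> * (2 * inverse (real (Suc j)))" by simp
        then show ?thesis using L1[of j] unfolding \<delta>_def distrib_right by linarith
      qed
      finally show ?thesis .
    qed
    show "norm (complex_of_real c * (\<integral>y. P j y \<partial>M) - complex_of_real c * (\<integral>y. G y \<partial>M)) \<le> \<delta> j" for j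
    proof -
      have "norm (complex_of_real c * (\<integral>y. P j y \<partial>M) - complex_of_real c * (\<integral>y. G y \<partial>M))
          = \<bar>c\<bar> * norm (\<integral>y. P j y - G y \<partial>M)"
        using integrable_L2fun[OF P] integrable_L2fun[OF G] by (simp add: norm_mult flip: right_diff_distrib)
      also have "\<dots> \<le> \<bar>c\<bar> * (2 * inverse (real (Suc j)))"
        by (intro mult_left_mono order_trans[OF integral_norm_bound L1]) simp
      also have "\<dots> \<le> \<delta> j" by (simp add: \<delta>_def distrib_right)
      finally show ?thesis .
    qed
    show "\<delta> \<longlonglongrightarrow> 0"
      unfolding \<delta>_def[abs_def]
      using tendsto_mult_left[OF tendsto_mult_left[OF LIMSEQ_inverse_real_of_nat, of 2], of "1 + \<bar>c\<bar>"]
      by simp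
  qed
qed

lemma eps_cocycle_limit_bounded:
  assumes "discrete_spectrum M S" and [measurable]: "G \<in> borel_measurable M" and "\<And>y. \<bar>G y\<bar> \<le> B"
  shows "(\<lambda>n. \<integral>y. G y * eps_cocycle (m n) y \<partial>M) \<longlonglongrightarrow> c * (\<integral>y. G y \<partial>M)"
proof -
  have "L2fun M (\<lambda>y. complex_of_real (G y))"
    by (rule L2fun_bounded[of _ B]) (use assms(3) in auto)
  from eps_cocycle_limit_L2fun[OF assms(1) this]
  have "(\<lambda>n. complex_of_real (\<integral>y. G y * eps_cocycle (m n) y \<partial>M)) \<longlonglongrightarrow> complex_of_real (c * (\<integral>y. G y \<partial>M))"
    by (simp flip: of_real_mult)
  then show ?thesis by (simp only: tendsto_of_real_iff)
qed

text \<open>Shifting the frequency by \<open>\<plusminus>1\<close> amounts, after the substitution \<open>y = S\<^sup>\<mp>\<^sup>1 x\<close>, to replacing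
  the bounded weight \<open>G\<close> by \<open>(G \<cdot> eps) \<circ> S\<^sup>\<mp>\<^sup>1\<close> (cocycle identity).\<close>

lemma eps_cocycle_shifted_limit:
  assumes "discrete_spectrum M S"
  shows "G \<in> borel_measurable M \<Longrightarrow> (\<And>y. \<bar>G y\<bar> \<le> B) \<Longrightarrow>
    (\<lambda>n. \<integral>y. G y * eps_cocycle (m n + k) y \<partial>M) \<longlonglongrightarrow> c * (\<integral>y. G y * eps_cocycle k y \<partial>M)"
proof (induction k arbitrary: G rule: int_induct[where k=0])
  case base
  then show ?case using eps_cocycle_limit_bounded[OF assms base.prems] by (simp add: eps_cocycle_0)
next
  case (step1 i)
  note [measurable] = step1.prems(1)
  define G' where "G' x = G (T x) * eps (T x)" for x
  have [measurable]: "G' \<in> borel_measurable M" unfolding G'_def by measurable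
  have "(\<integral>y. G y * eps_cocycle (j + 1) y \<partial>M) = (\<integral>x. G' x * eps_cocycle j x \<partial>M)" for j
  proof -
    have "(\<integral>x. G' x * eps_cocycle j x \<partial>M) = (\<integral>x. G' (S x) * eps_cocycle j (S x) \<partial>M)"
      by (rule integral_comp_invariant[OF S_measurable distr_S, symmetric]) measurable
    then show ?thesis by (simp add: G'_def eps_cocycle_Suc_left mult_ac)
  qed
  moreover have "\<bar>G' x\<bar> \<le> B" for x using step1.prems(2)[of "T x"] by (simp add: G'_def abs_mult abs_eps)
  ultimately show ?case
    using step1.IH[of G'] by (simp add: G'_def add.assoc[symmetric])
next
  case (step2 i)
  note [measurable] = step2.prems(1)
  define G' where "G' y = G (S y) * eps y" for y
  have [measurable]: "G' \<in> borel_measurable M" unfolding G'_def by measurable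
  have "(\<integral>y. G y * eps_cocycle (j - 1) y \<partial>M) = (\<integral>x. G' x * eps_cocycle j x \<partial>M)" for j
  proof -
    have "(\<integral>x. G' x * eps_cocycle j x \<partial>M) = (\<integral>x. G' (T x) * eps_cocycle j (T x) \<partial>M)"
      by (rule integral_comp_invariant[OF T_measurable distr_T, symmetric]) measurable
    moreover have "eps_cocycle j (T x) = eps (T x) * eps_cocycle (j - 1) x" for x
      using eps_cocycle_Suc_left[of "j - 1" "T x"] by simp
    moreover have "eps z * (eps z * a) = a" for z a
      using eps_squared[of z] by (simp add: mult.assoc[symmetric])
    ultimately show ?thesis by (simp add: G'_def mult_ac)
  qed
  moreover have "\<bar>G' x\<bar> \<le> B" for x using step2.prems(2)[of "S x"] by (simp add: G'_def abs_mult abs_eps)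
  ultimately show ?case
    using step2.IH[of G'] by (simp add: G'_def algebra_simps)
qed

end

end

lemma spectral_measure_weighted_limit:
  fixes M :: "'a measure" and \<sigma> :: "complex measure" and j t :: int
  assumes "binary_cocycle M S \<phi>" and "ergodic M S" and "discrete_spectrum M S" and "weakly_rigid M S q"
    and \<sigma>: "is_spectral_measure_one M S \<phi> \<sigma>"
    and lim: "(\<lambda>n. \<integral>y. (-1::real) ^ cocycle S \<phi> (j * t * int (q n)) y \<partial>M) \<longlonglongrightarrow> c"
    and "H \<in> borel_measurable borel" and "\<And>x. 0 \<le> H x \<and> H x \<le> 1"
  shows "(\<lambda>n. \<integral>x. complex_of_real (H x) * x powi (t * int (q n)) \<partial>pow_image \<sigma> j)
    \<longlonglongrightarrow> complex_of_real c * complex_of_real (\<integral>x. H x \<partial>pow_image \<sigma> j)"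
proof -
  interpret binary_cocycle M S \<phi> by fact
  have "finite_measure \<sigma>" "sets \<sigma> = sets borel" "emeasure \<sigma> (UNIV - sphere 0 1) = 0"
    using \<sigma> by (simp_all add: is_spectral_measure_one_def)
  then interpret circle_measure \<sigma> by (simp add: circle_measure_def circle_measure_axioms_def)
  define m where "m n = j * t * int (q n)" for n
  have coeff: "(\<integral>z. z powi k \<partial>\<sigma>) = complex_of_real (\<integral>y. eps_cocycle k y \<partial>M)" for k
    using \<sigma> by (simp add: is_spectral_measure_one_def eps_cocycle_def)
  have "(\<lambda>n. \<integral>y. eps_cocycle (m n) y \<partial>M) \<longlonglongrightarrow> c"
    using lim by (simp add: m_def eps_cocycle_def)
  moreover have "(\<lambda>n. prob (sign_change (S_powi (m n)))) \<longlonglongrightarrow> 0"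
    unfolding m_def by (rule prob_sign_change_rigid_multiple[OF \<open>weakly_rigid M S q\<close>])
  ultimately have shifted: "(\<lambda>n. \<integral>y. eps_cocycle (m n + k) y \<partial>M) \<longlonglongrightarrow> c * (\<integral>y. eps_cocycle k y \<partial>M)" for k
    using eps_cocycle_shifted_limit[where G="\<lambda>_. 1" and B=1, OF \<open>ergodic M S\<close> _ _ \<open>discrete_spectrum M S\<close>]
    by simp
  have "coeff_limit (\<lambda>n. j * (t * int (q n))) (complex_of_real c) (\<lambda>z. z powi k)" for k
  proof -
    have "(\<integral>z. z powi k * z powi m n \<partial>\<sigma>) = (\<integral>z. z powi (m n + k) \<partial>\<sigma>)" for n
    proof (rule integral_cong_AE)
      show "AE z in \<sigma>. z powi k * z powi m n = z powi (m n + k)"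
      using AE_on_circle
    proof eventually_elim
      case (elim z)
      then have "z \<noteq> 0" by auto
      then show ?case by (simp add: power_int_add mult.commute)
    qed
    qed (simp_all add: measurable_eq_borel)
    then show ?thesis
      using tendsto_of_real[OF shifted[of k]] by (simp add: coeff_limit_def coeff m_def mult.assoc)
  qed
  from pow_image_weighted_limit[OF this assms(7,8)] show ?thesis .
qed

theorem corollary2p2:
  fixes M :: "'a::polish_space measure" and S :: "'a \<Rightarrow> 'a" and q :: "nat \<Rightarrow> nat"
    and \<phi> :: "'a \<Rightarrow> nat" and \<sigma> :: "complex measure" and r s t :: int and c1 c2 :: real
  assumes "prob_space M" and "space M = UNIV" and "sets M = sets borel"
    and "mp_automorphism M S" and "ergodic M S" and "discrete_spectrum M S"
    and "strict_mono q" and "weakly_rigid M S q"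
    and "\<phi> \<in> borel_measurable M" and "\<And>y. \<phi> y \<in> {0, 1}"
    and "is_spectral_measure_one M S \<phi> \<sigma>"
    and "r \<noteq> s"
    and "(\<lambda>n. \<integral>y. (-1::real) ^ cocycle S \<phi> (r * t * int (q n)) y \<partial>M) \<longlonglongrightarrow> c1"
    and "(\<lambda>n. \<integral>y. (-1::real) ^ cocycle S \<phi> (s * t * int (q n)) y \<partial>M) \<longlonglongrightarrow> c2"
    and "c1 \<noteq> c2"
  shows "mutually_singular (pow_image \<sigma> r) (pow_image \<sigma> s)"
proof -
  have cocycle: "binary_cocycle M S \<phi>"
    using assms(1,2,4,9,10)
    by (simp add: binary_cocycle_def binary_cocycle_axioms_def mp_system_def mp_system_axioms_def)
  have "finite_measure \<sigma>" and sets_\<sigma>: "sets \<sigma> = sets borel"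
    using assms(11) by (simp_all add: is_spectral_measure_one_def)
  have "(\<lambda>z::complex. z powi k) \<in> \<sigma> \<rightarrow>\<^sub>M borel" for k
    unfolding measurable_cong_sets[OF sets_\<sigma> refl] by simp
  then have "finite_measure (pow_image \<sigma> k)" for k
    unfolding pow_image_def by (rule finite_measure.finite_measure_distr[OF \<open>finite_measure \<sigma>\<close>])
  moreover have meas: "measurable (pow_image \<sigma> k) N = measurable borel N" for k and N :: "'b measure"
    by (intro measurable_cong_sets) (simp_all add: pow_image_def)
  ultimately show ?thesis
  proof (intro mutually_singular_if_weighted_limits_differ[where h="\<lambda>n x. x powi (t * int (q n))"
        and c="complex_of_real c1" and c'="complex_of_real c2"])
    show "sets (pow_image \<sigma> s) = sets (pow_image \<sigma> r)" by (simp add: pow_image_def)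
    show "(\<lambda>x. x powi (t * int (q n))) \<in> borel_measurable (pow_image \<sigma> r)" for n
      by (simp add: meas)
    show "complex_of_real c1 \<noteq> complex_of_real c2" using \<open>c1 \<noteq> c2\<close> by simp
  qed (simp_all add: meas spectral_measure_weighted_limit[OF cocycle assms(5,6,8,11,13)]
      spectral_measure_weighted_limit[OF cocycle assms(5,6,8,11,14)])
qed

end
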